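(* Let $\mathbf{k}$ be a field, $Q$ a finite connected quiver, $\Lambda=\mathbf{k}Q/\mathcal{J}^2$ ($\mathcal{J}$ the arrow ideal), $n\ge2$, and assume $\mathcal{C}\subseteq\operatorname{mod}\Lambda$ is an $n$-cluster tilting subcategory. (a) If $w_1\to v\leftarrow w_2$ is a subquiver of $Q$ (two distinct arrows ending at $v$), then $\delta^+(w_1)=\delta^+(w_2)=1$. (b) If $u_1\leftarrow v\to u_2$ is a subquiver of $Q$ (two distinct arrows starting at $v$), then $\delta^-(u_1)=\delta^-(u_2)=1$.
   Context: Modules are finite-dimensional right modules. $\mathcal{C}$ is $n$-cluster tilting if it is functorially finite and $\mathcal{C}=\{X\mid \operatorname{Ext}^i(X,\mathcal{C})=0\ \forall 0<i<n\}=\{X\mid\operatorname{Ext}^i(\mathcal{C},X)=0\ \forall 0<i<n\}$. $\delta^-(v)$, $\delta^+(v)$ are the numbers of arrows ending, resp. starting, at $v$. *)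

theory Defs
  imports "Jordan_Normal_Form.Matrix"
begin

record ('v, 'a) quiver =
  verts :: "'v set"
  arrs  :: "'a set"
  src   :: "'a \<Rightarrow> 'v"
  tgt   :: "'a \<Rightarrow> 'v"

definition finite_quiver :: "('v, 'a) quiver \<Rightarrow> bool" where
  "finite_quiver Q \<longleftrightarrow> finite (verts Q) \<and> finite (arrs Q) \<and>
     (\<forall>\<alpha>\<in>arrs Q. src Q \<alpha> \<in> verts Q \<and> tgt Q \<alpha> \<in> verts Q)"

definition connected_quiver :: "('v, 'a) quiver \<Rightarrow> bool" where
  "connected_quiver Q \<longleftrightarrow> verts Q \<noteq> {} \<and>
     (let E = {(src Q \<alpha>, tgt Q \<alpha>) | \<alpha>. \<alpha> \<in> arrs Q}
      in \<forall>u\<in>verts Q. \<forall>w\<in>verts Q. (u, w) \<in> (E \<union> E\<inverse>)\<^sup>*)"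

definition out_deg :: "('v, 'a) quiver \<Rightarrow> 'v \<Rightarrow> nat" where
  "out_deg Q v = card {\<alpha>\<in>arrs Q. src Q \<alpha> = v}"

definition in_deg :: "('v, 'a) quiver \<Rightarrow> 'v \<Rightarrow> nat" where
  "in_deg Q v = card {\<alpha>\<in>arrs Q. tgt Q \<alpha> = v}"

text \<open>A representation: a dimension vector and, for each arrow, a matrix
  (linear map k^{d(src)} \<rightarrow> k^{d(tgt)}). Modules over kQ/J^2 are the
  representations in which every composite of two consecutive arrows is zero.\<close>

type_synonym ('v, 'a, 'k) rep = "('v \<Rightarrow> nat) \<times> ('a \<Rightarrow> 'k mat)"
type_synonym ('v, 'k) rmor = "'v \<Rightarrow> 'k mat"

definition is_rep :: "('v, 'a) quiver \<Rightarrow> ('v, 'a, 'k::field) rep \<Rightarrow> bool" where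
  "is_rep Q M \<longleftrightarrow>
     (\<forall>v. v \<notin> verts Q \<longrightarrow> fst M v = 0) \<and>
     (\<forall>\<alpha>\<in>arrs Q. snd M \<alpha> \<in> carrier_mat (fst M (tgt Q \<alpha>)) (fst M (src Q \<alpha>))) \<and>
     (\<forall>\<alpha>\<in>arrs Q. \<forall>\<beta>\<in>arrs Q. tgt Q \<alpha> = src Q \<beta> \<longrightarrow>
        snd M \<beta> * snd M \<alpha> = 0\<^sub>m (fst M (tgt Q \<beta>)) (fst M (src Q \<alpha>)))"

definition is_hom :: "('v, 'a) quiver \<Rightarrow> ('v, 'a, 'k::field) rep \<Rightarrow> ('v, 'a, 'k) rep
    \<Rightarrow> ('v, 'k) rmor \<Rightarrow> bool" where
  "is_hom Q M N g \<longleftrightarrow>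
     (\<forall>v\<in>verts Q. g v \<in> carrier_mat (fst N v) (fst M v)) \<and>
     (\<forall>\<alpha>\<in>arrs Q. g (tgt Q \<alpha>) * snd M \<alpha> = snd N \<alpha> * g (src Q \<alpha>))"

definition id_mor :: "('v, 'a, 'k::field) rep \<Rightarrow> ('v, 'k) rmor" where
  "id_mor M = (\<lambda>v. 1\<^sub>m (fst M v))"

definition zero_mor :: "('v, 'a, 'k::field) rep \<Rightarrow> ('v, 'a, 'k) rep \<Rightarrow> ('v, 'k) rmor" where
  "zero_mor M N = (\<lambda>v. 0\<^sub>m (fst N v) (fst M v))"

definition zero_rep :: "('v, 'a, 'k::field) rep" where
  "zero_rep = (\<lambda>_. 0, \<lambda>_. 0\<^sub>m 0 0)"

definition factors_as :: "('v, 'a) quiver \<Rightarrow> ('v, 'k::field) rmor \<Rightarrow> ('v, 'k) rmor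
    \<Rightarrow> ('v, 'k) rmor \<Rightarrow> bool" where
  "factors_as Q g f h \<longleftrightarrow> (\<forall>v\<in>verts Q. g v = f v * h v)"

definition lin_exact :: "'k::field mat \<Rightarrow> 'k mat \<Rightarrow> bool" where
  "lin_exact A B \<longleftrightarrow> B * A = 0\<^sub>m (dim_row B) (dim_col A) \<and>
     (\<forall>y\<in>carrier_vec (dim_col B). B *\<^sub>v y = 0\<^sub>v (dim_row B) \<longrightarrow>
        (\<exists>x\<in>carrier_vec (dim_col A). A *\<^sub>v x = y))"

text \<open>0 \<rightarrow> Ms!0 --gs!0--> Ms!1 --> ... --> Ms!(last) \<rightarrow> 0 is exact.\<close>
definition exact_seq :: "('v, 'a) quiver \<Rightarrow> ('v, 'a, 'k::field) rep list
    \<Rightarrow> ('v, 'k) rmor list \<Rightarrow> bool" where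
  "exact_seq Q Ms gs \<longleftrightarrow>
     length Ms = Suc (length gs) \<and>
     (\<forall>M\<in>set Ms. is_rep Q M) \<and>
     (\<forall>j<length gs. is_hom Q (Ms ! j) (Ms ! Suc j) (gs ! j)) \<and>
     (\<forall>v\<in>verts Q. \<forall>j<length Ms.
        lin_exact (if j = 0 then 0\<^sub>m (fst (Ms ! 0) v) 0 else (gs ! (j - 1)) v)
                  (if j = length gs then 0\<^sub>m 0 (fst (Ms ! j) v) else (gs ! j) v))"

type_synonym ('v, 'a, 'k) extension = "('v, 'a, 'k) rep list \<times> ('v, 'k) rmor list"

text \<open>An i-extension 0 \<rightarrow> Y \<rightarrow> E_1 \<rightarrow> ... \<rightarrow> E_i \<rightarrow> X \<rightarrow> 0 (middle terms Es).\<close>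
definition is_ext :: "('v, 'a) quiver \<Rightarrow> nat \<Rightarrow> ('v, 'a, 'k::field) rep \<Rightarrow> ('v, 'a, 'k) rep
    \<Rightarrow> ('v, 'a, 'k) extension \<Rightarrow> bool" where
  "is_ext Q i X Y e \<longleftrightarrow> length (fst e) = i \<and> exact_seq Q (Y # fst e @ [X]) (snd e)"

definition ext_mor :: "('v, 'a) quiver \<Rightarrow> nat \<Rightarrow> ('v, 'a, 'k::field) rep \<Rightarrow> ('v, 'a, 'k) rep
    \<Rightarrow> ('v, 'a, 'k) extension \<Rightarrow> ('v, 'a, 'k) extension \<Rightarrow> bool" where
  "ext_mor Q i X Y e e' \<longleftrightarrow> is_ext Q i X Y e \<and> is_ext Q i X Y e' \<and>
     (\<exists>hs. length hs = i \<and>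
        (\<forall>j<i. is_hom Q (fst e ! j) (fst e' ! j) (hs ! j)) \<and>
        (let H = id_mor Y # hs @ [id_mor X] in
         \<forall>j<Suc i. \<forall>v\<in>verts Q. (H ! Suc j) v * (snd e ! j) v = (snd e' ! j) v * (H ! j) v))"

definition yoneda_equiv :: "('v, 'a) quiver \<Rightarrow> nat \<Rightarrow> ('v, 'a, 'k::field) rep \<Rightarrow> ('v, 'a, 'k) rep
    \<Rightarrow> ('v, 'a, 'k) extension \<Rightarrow> ('v, 'a, 'k) extension \<Rightarrow> bool" where
  "yoneda_equiv Q i X Y = (\<lambda>e e'. ext_mor Q i X Y e e' \<or> ext_mor Q i X Y e' e)\<^sup>*\<^sup>*"

definition dsum :: "('v, 'a, 'k::field) rep \<Rightarrow> ('v, 'a, 'k) rep \<Rightarrow> ('v, 'a, 'k) rep" where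
  "dsum M N = (\<lambda>v. fst M v + fst N v,
     \<lambda>\<alpha>. four_block_mat (snd M \<alpha>) (0\<^sub>m (dim_row (snd M \<alpha>)) (dim_col (snd N \<alpha>)))
                        (0\<^sub>m (dim_row (snd N \<alpha>)) (dim_col (snd M \<alpha>))) (snd N \<alpha>))"

text \<open>The zero element of Ext^i(X,Y): for i = 1 the split sequence
  0 \<rightarrow> Y \<rightarrow> Y \<oplus> X \<rightarrow> X \<rightarrow> 0; for i \<ge> 2 the sequence
  0 \<rightarrow> Y = Y \<rightarrow> 0 \<rightarrow> ... \<rightarrow> 0 \<rightarrow> X = X \<rightarrow> 0.\<close>
definition trivial_ext :: "nat \<Rightarrow> ('v, 'a, 'k::field) rep \<Rightarrow> ('v, 'a, 'k) rep
    \<Rightarrow> ('v, 'a, 'k) extension" where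
  "trivial_ext i X Y =
     (if i = 1 then
        ([dsum Y X],
         [\<lambda>v. mat (fst Y v + fst X v) (fst Y v) (\<lambda>(a, b). if a = b then 1 else 0),
          \<lambda>v. mat (fst X v) (fst Y v + fst X v) (\<lambda>(a, b). if b = a + fst Y v then 1 else 0)])
      else
        (let Ms = Y # replicate (i - 2) zero_rep @ [X] in
         (Ms, id_mor Y # map (\<lambda>j. zero_mor (Ms ! j) (Ms ! Suc j)) [0..<i - 1] @ [id_mor X])))"

definition ext_vanishes :: "('v, 'a) quiver \<Rightarrow> nat \<Rightarrow> ('v, 'a, 'k::field) rep
    \<Rightarrow> ('v, 'a, 'k) rep \<Rightarrow> bool" where
  "ext_vanishes Q i X Y \<longleftrightarrow>
     (\<forall>e. is_ext Q i X Y e \<longrightarrow> yoneda_equiv Q i X Y e (trivial_ext i X Y))"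

definition right_approx :: "('v, 'a) quiver \<Rightarrow> (('v, 'a, 'k::field) rep \<Rightarrow> bool)
    \<Rightarrow> ('v, 'a, 'k) rep \<Rightarrow> bool" where
  "right_approx Q \<C> M \<longleftrightarrow> (\<exists>C0 f. \<C> C0 \<and> is_hom Q C0 M f \<and>
     (\<forall>C1 g. \<C> C1 \<and> is_hom Q C1 M g \<longrightarrow> (\<exists>h. is_hom Q C1 C0 h \<and> factors_as Q g f h)))"

definition left_approx :: "('v, 'a) quiver \<Rightarrow> (('v, 'a, 'k::field) rep \<Rightarrow> bool)
    \<Rightarrow> ('v, 'a, 'k) rep \<Rightarrow> bool" where
  "left_approx Q \<C> M \<longleftrightarrow> (\<exists>C0 f. \<C> C0 \<and> is_hom Q M C0 f \<and>
     (\<forall>C1 g. \<C> C1 \<and> is_hom Q M C1 g \<longrightarrow> (\<exists>h. is_hom Q C0 C1 h \<and> factors_as Q g h f)))"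

definition functorially_finite :: "('v, 'a) quiver \<Rightarrow> (('v, 'a, 'k::field) rep \<Rightarrow> bool) \<Rightarrow> bool" where
  "functorially_finite Q \<C> \<longleftrightarrow>
     (\<forall>M. is_rep Q M \<longrightarrow> right_approx Q \<C> M \<and> left_approx Q \<C> M)"

definition n_cluster_tilting :: "('v, 'a) quiver \<Rightarrow> nat \<Rightarrow> (('v, 'a, 'k::field) rep \<Rightarrow> bool) \<Rightarrow> bool" where
  "n_cluster_tilting Q n \<C> \<longleftrightarrow>
     (\<forall>X. \<C> X \<longrightarrow> is_rep Q X) \<and>
     functorially_finite Q \<C> \<and>
     (\<forall>X. is_rep Q X \<longrightarrow>
        (\<C> X \<longleftrightarrow> (\<forall>i. 0 < i \<and> i < n \<longrightarrow> (\<forall>C. \<C> C \<longrightarrow> ext_vanishes Q i X C)))) \<and>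
     (\<forall>X. is_rep Q X \<longrightarrow>
        (\<C> X \<longleftrightarrow> (\<forall>i. 0 < i \<and> i < n \<longrightarrow> (\<forall>C. \<C> C \<longrightarrow> ext_vanishes Q i C X))))"

end

theory Submission
  imports Defs "HOL-Library.Function_Algebras"
begin

(* Every projective and every injective module lies in an n-cluster tilting subcategory C, and
   for n >= 2 the defining property of C then forces Ext^1(I, P) = 0 for all injectives I and
   projectives P.  Over kQ/J^2, suppose an arrow alpha : w -> v shares its target with a second
   arrow beta and its source with a second arrow gamma.  Twisting the split extension of I_v by
   P_w along gamma (sending the alpha-component of I_v at w to the gamma-component of P_w at the
   target of gamma) yields an extension 0 -> P_w -> T -> I_v -> 0 that does not split: a
   retraction T -> P_w would map the top of I_v at v to the alpha-component of P_w with
   coefficient 1, by naturality along gamma and alpha, and with coefficient 0, by naturality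
   along beta.  Both parts of the theorem are instances of this. *)

section \<open>Matrices over a field\<close>

definition fun_scale :: "'k::field \<Rightarrow> (nat \<Rightarrow> 'k) \<Rightarrow> nat \<Rightarrow> 'k" where
  "fun_scale c f = (\<lambda>i. c * f i)"

lemma sum_fun_apply: "sum f A x = (\<Sum>i\<in>A. (f i :: 'b \<Rightarrow> 'c::comm_monoid_add) x)"
  by (induction A rule: infinite_finite_induct) auto

lemma vector_space_fun_scale: "vector_space (fun_scale :: 'k::field \<Rightarrow> _)"
  by unfold_locales (auto simp: fun_scale_def fun_eq_iff algebra_simps)

lemma vector_space_pair_fun_scale: "vector_space_pair (fun_scale :: 'k::field \<Rightarrow> _) fun_scale"
  by (simp add: vector_space_pair_def vector_space_fun_scale)

(* A matrix acting on sequences; k^m is embedded as the sequences vanishing from m on, so that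
   Vector_Spaces provides left inverses of injective matrices. *)
definition mat_seq_map :: "'k::field mat \<Rightarrow> (nat \<Rightarrow> 'k) \<Rightarrow> nat \<Rightarrow> 'k" where
  "mat_seq_map A x = (\<lambda>i. if i < dim_row A then (\<Sum>j<dim_col A. A $$ (i,j) * x j) else 0)"

lemma linear_mat_seq_map: "Vector_Spaces.linear fun_scale fun_scale (mat_seq_map A)"
  by unfold_locales
    (auto simp: mat_seq_map_def fun_scale_def fun_eq_iff algebra_simps sum.distrib sum_distrib_left)

lemma inj_on_mat_seq_map:
  fixes A :: "'k::field mat"
  assumes A: "A \<in> carrier_mat n m"
    and inj: "\<And>x. x \<in> carrier_vec m \<Longrightarrow> A *\<^sub>v x = 0\<^sub>v n \<Longrightarrow> x = 0\<^sub>v m"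
  shows "inj_on (mat_seq_map A) {x. \<forall>j\<ge>m. x j = 0}"
proof (rule inj_onI)
  fix x y assume x: "x \<in> {x. \<forall>j\<ge>m. x j = 0}" and y: "y \<in> {x. \<forall>j\<ge>m. x j = 0}"
    and e: "mat_seq_map A x = mat_seq_map A y"
  define z where "z = vec m (\<lambda>j. x j - y j)"
  have "A *\<^sub>v z = 0\<^sub>v n"
  proof (rule eq_vecI)
    fix i assume "i < dim_vec (0\<^sub>v n :: 'k vec)"
    hence i: "i < n" by simp
    have "(\<Sum>j<m. A $$ (i,j) * x j) = (\<Sum>j<m. A $$ (i,j) * y j)"
      using fun_cong[OF e, of i] i A by (simp add: mat_seq_map_def)
    hence "(\<Sum>j<m. A $$ (i,j) * (x j - y j)) = 0"
      by (simp add: algebra_simps sum_subtractf)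
    moreover have "(A *\<^sub>v z) $ i = (\<Sum>j<m. A $$ (i,j) * (x j - y j))"
      using A i by (simp add: z_def scalar_prod_def row_def lessThan_atLeast0)
    ultimately show "(A *\<^sub>v z) $ i = 0\<^sub>v n $ i" using i by simp
  qed (use A in simp)
  hence "z = 0\<^sub>v m" using inj by (simp add: z_def)
  hence "\<forall>j<m. x j = y j" by (auto simp: z_def vec_eq_iff)
  thus "x = y" using x y by (auto simp: fun_eq_iff) (metis not_le)
qed

lemma injective_mat_left_inverse:
  fixes A :: "'k::field mat"
  assumes A: "A \<in> carrier_mat n m"
    and inj: "\<And>x. x \<in> carrier_vec m \<Longrightarrow> A *\<^sub>v x = 0\<^sub>v n \<Longrightarrow> x = 0\<^sub>v m"
  obtains L where "L \<in> carrier_mat m n" "L * A = 1\<^sub>m m"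
proof -
  interpret vs: vector_space "fun_scale :: 'k \<Rightarrow> _" by (rule vector_space_fun_scale)
  interpret vp: vector_space_pair "fun_scale :: 'k \<Rightarrow> _" fun_scale by (rule vector_space_pair_fun_scale)
  let ?V = "{x::nat\<Rightarrow>'k. \<forall>j\<ge>m. x j = 0}"
  have "vs.subspace ?V" unfolding vs.subspace_def by (auto simp: fun_scale_def)
  then obtain g where lg: "Vector_Spaces.linear fun_scale fun_scale g" and gf: "\<forall>x\<in>?V. g (mat_seq_map A x) = x"
    using vp.linear_exists_left_inverse_on[OF linear_mat_seq_map _ inj_on_mat_seq_map[OF A inj]] by blast
  interpret lg: Vector_Spaces.linear fun_scale fun_scale g by (rule lg)
  define d where "d = (\<lambda>i::nat. \<lambda>k::nat. if k = i then (1::'k) else 0)"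
  define L where "L = mat m n (\<lambda>(j,i). g (d i) j)"
  have "L * A = 1\<^sub>m m"
  proof (rule eq_matI)
    fix j k assume "j < dim_row (1\<^sub>m m :: 'k mat)" and "k < dim_col (1\<^sub>m m :: 'k mat)"
    hence j: "j < m" and k: "k < m" by auto
    have Ad: "mat_seq_map A (d k) = (\<Sum>i<n. fun_scale (A $$ (i,k)) (d i))"
    proof -
      have "{..<m} \<inter> {k} = {k}" using k by auto
      thus ?thesis using A
        by (auto simp: mat_seq_map_def d_def fun_eq_iff fun_scale_def sum_fun_apply if_distrib sum.If_cases)
    qed
    have "(L * A) $$ (j,k) = (\<Sum>i<n. g (d i) j * A $$ (i,k))"
      using A j k by (simp add: L_def scalar_prod_def row_def col_def lessThan_atLeast0)
    also have "\<dots> = (\<Sum>i<n. fun_scale (A $$ (i,k)) (g (d i))) j"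
      by (simp add: sum_fun_apply fun_scale_def mult.commute)
    also have "\<dots> = g (mat_seq_map A (d k)) j" by (simp add: Ad lg.sum lg.scale)
    also have "\<dots> = d k j" using gf k by (auto simp: d_def)
    finally show "(L * A) $$ (j,k) = 1\<^sub>m m $$ (j,k)" using j k by (simp add: d_def)
  qed (use A in \<open>auto simp: L_def\<close>)
  thus ?thesis using that[of L] by (simp add: L_def)
qed

lemma zero_mat_mult_vec[simp]: "x \<in> carrier_vec n \<Longrightarrow> 0\<^sub>m m n *\<^sub>v x = 0\<^sub>v m"
  by (intro eq_vecI) (auto simp: scalar_prod_def)

lemma mat_mult_zero_vec[simp]: "A \<in> carrier_mat m n \<Longrightarrow> A *\<^sub>v 0\<^sub>v n = 0\<^sub>v m"
  by (intro eq_vecI) (auto simp: scalar_prod_def)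

lemma mult_mat_vec_unit:
  "(A :: 'k::field mat) \<in> carrier_mat n m \<Longrightarrow> j < m \<Longrightarrow> A *\<^sub>v unit_vec m j = col A j"
  by (intro eq_vecI) auto

lemma mult_eq_zero_matI:
  fixes A B :: "'k::field mat"
  assumes A: "A \<in> carrier_mat r n" and B: "B \<in> carrier_mat n c"
    and z: "\<And>i j k. i < r \<Longrightarrow> j < c \<Longrightarrow> k < n \<Longrightarrow> A $$ (i,k) * B $$ (k,j) = 0"
  shows "A * B = 0\<^sub>m r c"
proof (rule eq_matI)
  fix i j assume "i < dim_row (0\<^sub>m r c :: 'k mat)" "j < dim_col (0\<^sub>m r c :: 'k mat)"
  hence i: "i < r" and j: "j < c" by auto
  have "(A * B) $$ (i, j) = (\<Sum>k\<in>{0..<n}. A $$ (i,k) * B $$ (k,j))"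
    using A B i j by (simp add: scalar_prod_def)
  also have "\<dots> = 0" using z i j by (intro sum.neutral) auto
  finally show "(A * B) $$ (i, j) = 0\<^sub>m r c $$ (i, j)" using i j by simp
qed (use A B in auto)

lemma index_mult_unit_col:
  fixes A B :: "'k::field mat"
  assumes A: "A \<in> carrier_mat r n" and B: "B \<in> carrier_mat n c" and i: "i < r" and j: "j < c"
    and k: "k < n" and u: "\<And>m. m < n \<Longrightarrow> B $$ (m, j) = (if m = k then 1 else 0)"
  shows "(A * B) $$ (i, j) = A $$ (i, k)"
proof -
  have "col B j = unit_vec n k" using B j u by (intro eq_vecI) (auto simp: unit_vec_def)
  thus ?thesis using A B i j k by simp
qed

lemma index_mult_unit_row:
  fixes A B :: "'k::field mat"
  assumes A: "A \<in> carrier_mat r n" and B: "B \<in> carrier_mat n c" and i: "i < r" and j: "j < c"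
    and k: "k < n" and u: "\<And>m. m < n \<Longrightarrow> A $$ (i, m) = (if m = k then 1 else 0)"
  shows "(A * B) $$ (i, j) = B $$ (k, j)"
proof -
  have "row A i = unit_vec n k" using A i u by (intro eq_vecI) (auto simp: unit_vec_def)
  thus ?thesis using A B i j k by simp
qed

lemma index_mult_zero_col:
  fixes A B :: "'k::field mat"
  assumes A: "A \<in> carrier_mat r n" and B: "B \<in> carrier_mat n c" and i: "i < r" and j: "j < c"
    and u: "\<And>m. m < n \<Longrightarrow> B $$ (m, j) = 0"
  shows "(A * B) $$ (i, j) = 0"
proof -
  have "col B j = 0\<^sub>v n" using B j u by (intro eq_vecI) auto
  thus ?thesis using A B i j by simp
qed

lemma index_mult_zero_row:
  fixes A B :: "'k::field mat"
  assumes A: "A \<in> carrier_mat r n" and B: "B \<in> carrier_mat n c" and i: "i < r" and j: "j < c"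
    and u: "\<And>m. m < n \<Longrightarrow> A $$ (i, m) = 0"
  shows "(A * B) $$ (i, j) = 0"
proof -
  have "row A i = 0\<^sub>v n" using A i u by (intro eq_vecI) auto
  thus ?thesis using A B i j by simp
qed

lemma bijective_mat_inverse:
  fixes h :: "'k::field mat"
  assumes h: "h \<in> carrier_mat n m"
    and inj: "\<And>x. x \<in> carrier_vec m \<Longrightarrow> h *\<^sub>v x = 0\<^sub>v n \<Longrightarrow> x = 0\<^sub>v m"
    and surj: "\<And>y. y \<in> carrier_vec n \<Longrightarrow> \<exists>x\<in>carrier_vec m. h *\<^sub>v x = y"
  obtains L where "L \<in> carrier_mat m n" "L * h = 1\<^sub>m m" "h * L = 1\<^sub>m n"
proof -
  obtain L where L: "L \<in> carrier_mat m n" and Lh: "L * h = 1\<^sub>m m"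
    using injective_mat_left_inverse[OF h inj] by blast
  have "h * L = 1\<^sub>m n"
  proof (rule mat_col_eqI)
    fix j assume "j < dim_col (1\<^sub>m n :: 'k mat)"
    hence j: "j < n" by simp
    obtain x where x: "x \<in> carrier_vec m" and hx: "h *\<^sub>v x = unit_vec n j" using surj[of "unit_vec n j"] by auto
    have "col (h * L) j = h *\<^sub>v col L j" using col_mult2[OF h L j] .
    also have "col L j = L *\<^sub>v (h *\<^sub>v x)" using mult_mat_vec_unit[OF L j] hx by simp
    also have "L *\<^sub>v (h *\<^sub>v x) = x" using Lh L h x by (metis assoc_mult_mat_vec one_mult_mat_vec)
    finally show "col (h * L) j = col (1\<^sub>m n) j" using hx j by simp
  qed (use h L in auto)
  thus ?thesis using that L Lh by blast
qed

lemma short_five_lemma_mat: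
  fixes g1 p1 g2 p2 h :: "'k::field mat"
  assumes cg1: "g1 \<in> carrier_mat m1 a" and cp1: "p1 \<in> carrier_mat c m1"
    and cp2: "p2 \<in> carrier_mat c m2" and ch: "h \<in> carrier_mat m2 m1"
    and hg: "h * g1 = g2" and ph: "p1 = p2 * h"
    and inj2: "\<And>y. y \<in> carrier_vec a \<Longrightarrow> g2 *\<^sub>v y = 0\<^sub>v m2 \<Longrightarrow> y = 0\<^sub>v a"
    and ex1: "\<And>x. x \<in> carrier_vec m1 \<Longrightarrow> p1 *\<^sub>v x = 0\<^sub>v c \<Longrightarrow> \<exists>y\<in>carrier_vec a. g1 *\<^sub>v y = x"
    and ex2: "\<And>w. w \<in> carrier_vec m2 \<Longrightarrow> p2 *\<^sub>v w = 0\<^sub>v c \<Longrightarrow> \<exists>y\<in>carrier_vec a. g2 *\<^sub>v y = w"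
    and surj1: "\<And>z. z \<in> carrier_vec c \<Longrightarrow> \<exists>x\<in>carrier_vec m1. p1 *\<^sub>v x = z"
  obtains L where "L \<in> carrier_mat m1 m2" "L * h = 1\<^sub>m m1" "h * L = 1\<^sub>m m2"
proof (rule bijective_mat_inverse[OF ch])
  fix x assume x: "x \<in> carrier_vec m1" and hx: "h *\<^sub>v x = 0\<^sub>v m2"
  have "p1 *\<^sub>v x = p2 *\<^sub>v (h *\<^sub>v x)" using ph cp2 ch x by simp
  also have "\<dots> = 0\<^sub>v c" using hx cp2 by simp
  finally obtain y where y: "y \<in> carrier_vec a" and gy: "g1 *\<^sub>v y = x" using ex1[OF x] by blast
  have "g2 *\<^sub>v y = h *\<^sub>v (g1 *\<^sub>v y)" using hg[symmetric] ch cg1 y by simp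
  also have "\<dots> = 0\<^sub>v m2" using gy hx by simp
  finally have "y = 0\<^sub>v a" using inj2 y by blast
  thus "x = 0\<^sub>v m1" using gy cg1 by simp
next
  fix w :: "'k vec" assume w: "w \<in> carrier_vec m2"
  obtain u where u: "u \<in> carrier_vec m1" and pu: "p1 *\<^sub>v u = p2 *\<^sub>v w"
    using surj1[of "p2 *\<^sub>v w"] cp2 w by auto
  have "p2 *\<^sub>v (w - h *\<^sub>v u) = p2 *\<^sub>v w - p2 *\<^sub>v (h *\<^sub>v u)"
    using cp2 ch w u by (simp add: mult_minus_distrib_mat_vec)
  also have "p2 *\<^sub>v (h *\<^sub>v u) = p1 *\<^sub>v u" using ph cp2 ch u by simp
  finally have "p2 *\<^sub>v (w - h *\<^sub>v u) = 0\<^sub>v c" using pu cp2 w by simp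
  then obtain y where y: "y \<in> carrier_vec a" and gy: "g2 *\<^sub>v y = w - h *\<^sub>v u"
    using ex2[of "w - h *\<^sub>v u"] ch u w by auto
  have "h *\<^sub>v (u + g1 *\<^sub>v y) = h *\<^sub>v u + h *\<^sub>v (g1 *\<^sub>v y)"
    using ch cg1 u y by (simp add: mult_add_distrib_mat_vec)
  also have "h *\<^sub>v (g1 *\<^sub>v y) = g2 *\<^sub>v y" using hg ch cg1 y by (metis assoc_mult_mat_vec)
  finally have "h *\<^sub>v (u + g1 *\<^sub>v y) = h *\<^sub>v u + (w - h *\<^sub>v u)" using gy by simp
  also have "\<dots> = w" using ch u w by (intro eq_vecI) auto
  finally show "\<exists>x\<in>carrier_vec m1. h *\<^sub>v x = w" using u y cg1 by (intro bexI[of _ "u + g1 *\<^sub>v y"]) auto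
qed (rule that)

definition incl1_mat :: "nat \<Rightarrow> nat \<Rightarrow> 'k::field mat" where
  "incl1_mat a b = mat (a + b) a (\<lambda>(r, c). if r = c then 1 else 0)"

definition proj1_mat :: "nat \<Rightarrow> nat \<Rightarrow> 'k::field mat" where
  "proj1_mat a b = mat a (a + b) (\<lambda>(r, c). if r = c then 1 else 0)"

definition proj2_mat :: "nat \<Rightarrow> nat \<Rightarrow> 'k::field mat" where
  "proj2_mat a b = mat b (a + b) (\<lambda>(r, c). if c = r + a then 1 else 0)"

lemma incl1_mat_carrier[simp]: "incl1_mat a b \<in> carrier_mat (a + b) a"
  and incl1_mat_dim[simp]: "dim_row (incl1_mat a b) = a + b" "dim_col (incl1_mat a b) = a"
  and proj1_mat_carrier[simp]: "proj1_mat a b \<in> carrier_mat a (a + b)"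
  and proj1_mat_dim[simp]: "dim_row (proj1_mat a b) = a" "dim_col (proj1_mat a b) = a + b"
  and proj2_mat_carrier[simp]: "proj2_mat a b \<in> carrier_mat b (a + b)"
  and proj2_mat_dim[simp]: "dim_row (proj2_mat a b) = b" "dim_col (proj2_mat a b) = a + b"
  by (auto simp: incl1_mat_def proj1_mat_def proj2_mat_def)

lemma col_incl1_mat: "j < a \<Longrightarrow> col (incl1_mat a b :: 'k::field mat) j = unit_vec (a + b) j"
  by (intro eq_vecI) (auto simp: incl1_mat_def unit_vec_def)

lemma row_incl1_mat:
  "i < a + b \<Longrightarrow> row (incl1_mat a b :: 'k::field mat) i = (if i < a then unit_vec a i else 0\<^sub>v a)"
  by (intro eq_vecI) (auto simp: incl1_mat_def unit_vec_def)

lemma row_proj1_mat: "i < a \<Longrightarrow> row (proj1_mat a b :: 'k::field mat) i = unit_vec (a + b) i"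
  by (intro eq_vecI) (auto simp: proj1_mat_def unit_vec_def)

lemma col_proj1_mat:
  "j < a + b \<Longrightarrow> col (proj1_mat a b :: 'k::field mat) j = (if j < a then unit_vec a j else 0\<^sub>v a)"
  by (intro eq_vecI) (auto simp: proj1_mat_def unit_vec_def)

lemma row_proj2_mat: "i < b \<Longrightarrow> row (proj2_mat a b :: 'k::field mat) i = unit_vec (a + b) (i + a)"
  by (intro eq_vecI) (auto simp: proj2_mat_def unit_vec_def)

lemma col_proj2_mat:
  "j < a + b \<Longrightarrow> col (proj2_mat a b :: 'k::field mat) j = (if j < a then 0\<^sub>v b else unit_vec b (j - a))"
  by (intro eq_vecI) (auto simp: proj2_mat_def unit_vec_def)

lemma index_mult_incl1_mat_right:
  "A \<in> carrier_mat n (a + b) \<Longrightarrow> i < n \<Longrightarrow> j < a \<Longrightarrow> (A * incl1_mat a b) $$ (i, j) = A $$ (i, j)"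
  by (simp add: col_incl1_mat)

lemma index_mult_incl1_mat_left: "B \<in> carrier_mat a m \<Longrightarrow> i < a + b \<Longrightarrow> j < m \<Longrightarrow>
   (incl1_mat a b * B) $$ (i, j) = (if i < a then B $$ (i, j) else 0)"
  by (simp add: row_incl1_mat)

lemma index_mult_proj2_mat_left: "A \<in> carrier_mat (a + b) m \<Longrightarrow> i < b \<Longrightarrow> j < m \<Longrightarrow>
   (proj2_mat a b * A) $$ (i, j) = A $$ (i + a, j)"
  by (simp add: row_proj2_mat)

lemma index_mult_proj2_mat_right: "B \<in> carrier_mat m b \<Longrightarrow> i < m \<Longrightarrow> j < a + b \<Longrightarrow>
   (B * proj2_mat a b) $$ (i, j) = (if j < a then 0 else B $$ (i, j - a))"
  by (simp add: col_proj2_mat)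

lemma proj1_mat_mult_incl1_mat: "proj1_mat a b * incl1_mat a b = (1\<^sub>m a :: 'k::field mat)"
  by (rule eq_matI) (auto simp: row_proj1_mat col_incl1_mat)

lemma proj1_mat_mult_block_diag:
  fixes A :: "'k::field mat"
  assumes A: "A \<in> carrier_mat a c" and B: "B \<in> carrier_mat b d"
  shows "proj1_mat a b * four_block_mat A (0\<^sub>m a d) (0\<^sub>m b c) B = A * proj1_mat c d"
proof (rule eq_matI)
  fix i j assume "i < dim_row (A * proj1_mat c d)" "j < dim_col (A * proj1_mat c d)"
  hence i: "i < a" and j: "j < c + d" using A by auto
  have "(proj1_mat a b * four_block_mat A (0\<^sub>m a d) (0\<^sub>m b c) B) $$ (i, j)
      = col (four_block_mat A (0\<^sub>m a d) (0\<^sub>m b c) B) j $ i"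
    using i j A B by (simp add: row_proj1_mat)
  also have "\<dots> = (A * proj1_mat c d) $$ (i, j)"
    using i j A B by (simp add: col_proj1_mat)
  finally show "(proj1_mat a b * four_block_mat A (0\<^sub>m a d) (0\<^sub>m b c) B) $$ (i, j)
      = (A * proj1_mat c d) $$ (i, j)" .
qed (use A B in auto)

lemma mult_row_block_mat:
  assumes M: "M \<in> carrier_mat r n" and A: "A \<in> carrier_mat n a" and B: "B \<in> carrier_mat n b"
  shows "M * four_block_mat A B (0\<^sub>m 0 a) (0\<^sub>m 0 b) = four_block_mat (M * A) (M * B) (0\<^sub>m 0 a) (0\<^sub>m 0 b)"
proof (rule eq_matI)
  fix i j assume i: "i < dim_row (four_block_mat (M * A) (M * B) (0\<^sub>m 0 a) (0\<^sub>m 0 b))"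
    and j: "j < dim_col (four_block_mat (M * A) (M * B) (0\<^sub>m 0 a) (0\<^sub>m 0 b))"
  have c: "col (four_block_mat A B (0\<^sub>m 0 a) (0\<^sub>m 0 b)) j = (if j < a then col A j else col B (j - a))"
    using A B j by (intro eq_vecI) auto
  show "(M * four_block_mat A B (0\<^sub>m 0 a) (0\<^sub>m 0 b)) $$ (i, j)
      = four_block_mat (M * A) (M * B) (0\<^sub>m 0 a) (0\<^sub>m 0 b) $$ (i, j)"
    using i j M A B by (simp add: c)
qed (use M A B in auto)

lemma mult_col_block_mat:
  assumes M: "M \<in> carrier_mat n m" and A: "A \<in> carrier_mat a n" and B: "B \<in> carrier_mat b n"
  shows "four_block_mat A (0\<^sub>m a 0) B (0\<^sub>m b 0) * M = four_block_mat (A * M) (0\<^sub>m a 0) (B * M) (0\<^sub>m b 0)"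
proof (rule eq_matI)
  fix i j assume i: "i < dim_row (four_block_mat (A * M) (0\<^sub>m a 0) (B * M) (0\<^sub>m b 0))"
    and j: "j < dim_col (four_block_mat (A * M) (0\<^sub>m a 0) (B * M) (0\<^sub>m b 0))"
  have c: "row (four_block_mat A (0\<^sub>m a 0) B (0\<^sub>m b 0)) i = (if i < a then row A i else row B (i - a))"
    using A B i by (intro eq_vecI) auto
  show "(four_block_mat A (0\<^sub>m a 0) B (0\<^sub>m b 0) * M) $$ (i, j)
      = four_block_mat (A * M) (0\<^sub>m a 0) (B * M) (0\<^sub>m b 0) $$ (i, j)"
    using i j M A B by (simp add: c)
qed (use M A B in auto)

lemma lin_exactD:
  assumes "lin_exact A B" "A \<in> carrier_mat m n" "B \<in> carrier_mat p m"
  shows lin_exact_mult_zero: "B * A = 0\<^sub>m p n"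
    and lin_exact_kernel_image: "\<And>y. y \<in> carrier_vec m \<Longrightarrow> B *\<^sub>v y = 0\<^sub>v p \<Longrightarrow> \<exists>x\<in>carrier_vec n. A *\<^sub>v x = y"
  using assms unfolding lin_exact_def by auto

lemma lin_exact_zero_left_injective:
  assumes "lin_exact (0\<^sub>m m 0) B" "B \<in> carrier_mat p m" "y \<in> carrier_vec m" "B *\<^sub>v y = 0\<^sub>v p"
  shows "y = 0\<^sub>v m"
  using lin_exact_kernel_image[OF assms(1) _ assms(2), of 0] assms(3,4) by auto

lemma lin_exact_zero_right_surjective:
  assumes "lin_exact A (0\<^sub>m 0 m)" "A \<in> carrier_mat m n" "y \<in> carrier_vec m"
  shows "\<exists>x\<in>carrier_vec n. A *\<^sub>v x = y"
  using lin_exact_kernel_image[OF assms(1) assms(2), of 0] assms(3) by auto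

lemma lin_exact_zero_one: "lin_exact (0\<^sub>m m k :: 'k::field mat) (1\<^sub>m m)"
  unfolding lin_exact_def
proof (intro conjI ballI impI)
  fix y :: "'k vec" assume "y \<in> carrier_vec (dim_col (1\<^sub>m m :: 'k mat))"
    "1\<^sub>m m *\<^sub>v y = 0\<^sub>v (dim_row (1\<^sub>m m :: 'k mat))"
  thus "\<exists>x\<in>carrier_vec (dim_col (0\<^sub>m m k :: 'k mat)). 0\<^sub>m m k *\<^sub>v x = y"
    by (intro bexI[of _ "0\<^sub>v k"]) auto
qed auto

lemma lin_exact_one_zero: "lin_exact (1\<^sub>m n :: 'k::field mat) (0\<^sub>m m n)"
  unfolding lin_exact_def by (auto intro!: bexI)

lemma lin_exact_zero_zero: "lin_exact (0\<^sub>m 0 a :: 'k::field mat) (0\<^sub>m b 0)"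
  unfolding lin_exact_def
proof (intro conjI ballI impI)
  fix y :: "'k vec" assume "y \<in> carrier_vec (dim_col (0\<^sub>m b 0 :: 'k mat))"
  thus "\<exists>x\<in>carrier_vec (dim_col (0\<^sub>m 0 a :: 'k mat)). 0\<^sub>m 0 a *\<^sub>v x = y"
    by (intro bexI[of _ "0\<^sub>v a"]) auto
qed auto

lemma lin_exact_zero_incl1_mat: "lin_exact (0\<^sub>m a 0) (incl1_mat a b :: 'k::field mat)"
  unfolding lin_exact_def
proof (intro conjI ballI impI)
  fix y :: "'k vec" assume y: "y \<in> carrier_vec (dim_col (incl1_mat a b :: 'k mat))"
    and z: "incl1_mat a b *\<^sub>v y = 0\<^sub>v (dim_row (incl1_mat a b :: 'k mat))"
  have "y = 0\<^sub>v a"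
  proof (rule eq_vecI)
    fix i assume "i < dim_vec (0\<^sub>v a :: 'k vec)"
    hence i: "i < a" by simp
    have "(incl1_mat a b *\<^sub>v y) $ i = 0" using z i by simp
    thus "y $ i = 0\<^sub>v a $ i" using y i by (simp add: row_incl1_mat)
  qed (use y in simp)
  thus "\<exists>x\<in>carrier_vec (dim_col (0\<^sub>m a 0 :: 'k mat)). 0\<^sub>m a 0 *\<^sub>v x = y"
    by (intro bexI[of _ "0\<^sub>v 0"]) auto
qed (auto intro!: eq_matI)

lemma lin_exact_incl1_mat_proj2_mat: "lin_exact (incl1_mat a b) (proj2_mat a b :: 'k::field mat)"
  unfolding lin_exact_def
proof (intro conjI ballI impI)
  show "(proj2_mat a b * incl1_mat a b :: 'k mat)
      = 0\<^sub>m (dim_row (proj2_mat a b :: 'k mat)) (dim_col (incl1_mat a b :: 'k mat))"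
  proof (rule eq_matI)
    fix i j assume "i < dim_row (0\<^sub>m (dim_row (proj2_mat a b :: 'k mat)) (dim_col (incl1_mat a b :: 'k mat)))"
      "j < dim_col (0\<^sub>m (dim_row (proj2_mat a b :: 'k mat)) (dim_col (incl1_mat a b :: 'k mat)))"
    hence i: "i < b" and j: "j < a" by auto
    show "(proj2_mat a b * incl1_mat a b :: 'k mat) $$ (i, j)
      = 0\<^sub>m (dim_row (proj2_mat a b :: 'k mat)) (dim_col (incl1_mat a b :: 'k mat)) $$ (i, j)"
      unfolding index_mult_proj2_mat_left[OF incl1_mat_carrier i j] using i j by (simp add: incl1_mat_def)
  qed auto
  fix y :: "'k vec" assume y: "y \<in> carrier_vec (dim_col (proj2_mat a b :: 'k mat))"
    and z: "proj2_mat a b *\<^sub>v y = 0\<^sub>v (dim_row (proj2_mat a b :: 'k mat))"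
  have yz: "y $ k = 0" if "a \<le> k" "k < a + b" for k
  proof -
    have "(proj2_mat a b *\<^sub>v y) $ (k - a) = 0" using z that by simp
    thus "y $ k = 0" using y that by (simp add: row_proj2_mat)
  qed
  have "incl1_mat a b *\<^sub>v vec a (($) y) = y"
    using y yz by (intro eq_vecI) (auto simp: row_incl1_mat)
  thus "\<exists>x\<in>carrier_vec (dim_col (incl1_mat a b :: 'k mat)). incl1_mat a b *\<^sub>v x = y"
    by (intro bexI[of _ "vec a (\<lambda>i. y $ i)"]) auto
qed

lemma lin_exact_proj2_mat_zero: "lin_exact (proj2_mat a b :: 'k::field mat) (0\<^sub>m 0 b)"
  unfolding lin_exact_def
proof (intro conjI ballI impI)
  fix y :: "'k vec" assume y: "y \<in> carrier_vec (dim_col (0\<^sub>m 0 b :: 'k mat))"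
  let ?x = "vec (a + b) (\<lambda>k. if k < a then 0 else y $ (k - a))"
  have "proj2_mat a b *\<^sub>v ?x = y"
    using y by (intro eq_vecI) (auto simp: row_proj2_mat)
  thus "\<exists>x\<in>carrier_vec (dim_col (proj2_mat a b :: 'k mat)). proj2_mat a b *\<^sub>v x = y"
    by (intro bexI[of _ ?x]) auto
qed (auto intro!: eq_matI)

definition wf_quiver :: "('v, 'a) quiver \<Rightarrow> bool" where
  "wf_quiver Q \<longleftrightarrow> (\<forall>b\<in>arrs Q. src Q b \<in> verts Q \<and> tgt Q b \<in> verts Q)"

lemma finite_quiver_wf: "finite_quiver Q \<Longrightarrow> wf_quiver Q"
  unfolding finite_quiver_def wf_quiver_def by auto

lemma wf_quiverD: "wf_quiver Q \<Longrightarrow> b \<in> arrs Q \<Longrightarrow> src Q b \<in> verts Q \<and> tgt Q b \<in> verts Q"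
  unfolding wf_quiver_def by auto

lemma is_rep_carrier:
  "is_rep Q M \<Longrightarrow> b \<in> arrs Q \<Longrightarrow> snd M b \<in> carrier_mat (fst M (tgt Q b)) (fst M (src Q b))"
  unfolding is_rep_def by auto

lemma is_rep_mult_zero: "is_rep Q M \<Longrightarrow> b \<in> arrs Q \<Longrightarrow> c \<in> arrs Q \<Longrightarrow> tgt Q b = src Q c \<Longrightarrow>
    snd M c * snd M b = 0\<^sub>m (fst M (tgt Q c)) (fst M (src Q b))"
  unfolding is_rep_def by auto

lemma is_rep_zero_rep: "is_rep Q (zero_rep :: ('v,'a,'k::field) rep)"
  unfolding is_rep_def zero_rep_def by auto

lemma is_hom_carrier: "is_hom Q M N g \<Longrightarrow> v \<in> verts Q \<Longrightarrow> g v \<in> carrier_mat (fst N v) (fst M v)"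
  unfolding is_hom_def by auto

lemma is_hom_comm: "is_hom Q M N g \<Longrightarrow> b \<in> arrs Q \<Longrightarrow> g (tgt Q b) * snd M b = snd N b * g (src Q b)"
  unfolding is_hom_def by auto

lemma is_hom_id_mor: "is_rep Q M \<Longrightarrow> is_hom Q M M (id_mor M)"
  unfolding is_hom_def id_mor_def by (auto dest: is_rep_carrier)

lemma is_hom_zero_mor: "is_rep Q M \<Longrightarrow> is_rep Q N \<Longrightarrow> is_hom Q M N (zero_mor M N)"
  unfolding is_hom_def zero_mor_def by (auto dest!: is_rep_carrier)

lemma is_hom_comp:
  assumes Q: "wf_quiver Q" and M: "is_rep Q M" and N: "is_rep Q N" and K: "is_rep Q K"
    and f: "is_hom Q M N f" and g: "is_hom Q N K g"
  shows "is_hom Q M K (\<lambda>v. g v * f v)"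
  unfolding is_hom_def
proof (intro conjI ballI)
  fix v assume v: "v \<in> verts Q"
  show "g v * f v \<in> carrier_mat (fst K v) (fst M v)"
    using is_hom_carrier[OF f v] is_hom_carrier[OF g v] by simp
next
  fix b assume b: "b \<in> arrs Q"
  have t: "tgt Q b \<in> verts Q" and s: "src Q b \<in> verts Q" using wf_quiverD[OF Q b] by auto
  note cM = is_rep_carrier[OF M b] and cN = is_rep_carrier[OF N b] and cK = is_rep_carrier[OF K b]
  note cft = is_hom_carrier[OF f t] and cfs = is_hom_carrier[OF f s]
  note cgt = is_hom_carrier[OF g t] and cgs = is_hom_carrier[OF g s]
  have "g (tgt Q b) * f (tgt Q b) * snd M b = g (tgt Q b) * (f (tgt Q b) * snd M b)"
    using cM cft cgt by simp
  also have "\<dots> = (g (tgt Q b) * snd N b) * f (src Q b)"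
    using cN cfs cgt by (simp add: is_hom_comm[OF f b])
  also have "\<dots> = snd K b * (g (src Q b) * f (src Q b))"
    using cK cgs cfs by (simp add: is_hom_comm[OF g b])
  finally show "g (tgt Q b) * f (tgt Q b) * snd M b = snd K b * (g (src Q b) * f (src Q b))" .
qed

section \<open>Extensions\<close>

abbreviation ext_terms :: "('v,'a,'k) rep \<Rightarrow> ('v,'a,'k) rep \<Rightarrow> ('v,'a,'k) extension \<Rightarrow> ('v,'a,'k) rep list"
  where "ext_terms X Y e \<equiv> Y # fst e @ [X]"

lemma is_extD:
  assumes "is_ext Q i X Y e"
  shows is_ext_length: "length (fst e) = i" "length (snd e) = Suc i"
    and is_ext_reps: "is_rep Q X" "is_rep Q Y" "\<And>j. j < i \<Longrightarrow> is_rep Q (fst e ! j)"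
    and is_ext_homs:
      "\<And>j. j < Suc i \<Longrightarrow> is_hom Q (ext_terms X Y e ! j) (ext_terms X Y e ! Suc j) (snd e ! j)"
    and is_ext_exact:
      "\<And>v j. v \<in> verts Q \<Longrightarrow> 0 < j \<Longrightarrow> j \<le> i \<Longrightarrow> lin_exact ((snd e ! (j - 1)) v) ((snd e ! j) v)"
    and is_ext_exact_first: "\<And>v. v \<in> verts Q \<Longrightarrow> lin_exact (0\<^sub>m (fst Y v) 0) ((snd e ! 0) v)"
    and is_ext_exact_last: "\<And>v. v \<in> verts Q \<Longrightarrow> lin_exact ((snd e ! i) v) (0\<^sub>m 0 (fst X v))"
proof -
  have L: "length (fst e) = i" and ex: "exact_seq Q (ext_terms X Y e) (snd e)"
    using assms unfolding is_ext_def by auto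
  note ex' = ex[unfolded exact_seq_def]
  show "length (fst e) = i" by fact
  show Lg: "length (snd e) = Suc i" using ex' L by simp
  show "is_rep Q X" "is_rep Q Y" using ex' by auto
  show "\<And>j. j < i \<Longrightarrow> is_rep Q (fst e ! j)" using ex' L by auto
  show "\<And>j. j < Suc i \<Longrightarrow> is_hom Q (ext_terms X Y e ! j) (ext_terms X Y e ! Suc j) (snd e ! j)"
    using ex' Lg by auto
  have exact_at: "lin_exact (if j = 0 then 0\<^sub>m (fst (ext_terms X Y e ! 0) v) 0 else (snd e ! (j - 1)) v)
      (if j = length (snd e) then 0\<^sub>m 0 (fst (ext_terms X Y e ! j) v) else (snd e ! j) v)"
    if "v \<in> verts Q" "j < length (ext_terms X Y e)" for v j
    using ex' that by blast
  show "lin_exact ((snd e ! (j - 1)) v) ((snd e ! j) v)" if "v \<in> verts Q" "0 < j" "j \<le> i" for v j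
    using exact_at[of v j] that L Lg by simp
  show "lin_exact (0\<^sub>m (fst Y v) 0) ((snd e ! 0) v)" if "v \<in> verts Q" for v
    using exact_at[of v 0] that Lg by simp
  show "lin_exact ((snd e ! i) v) (0\<^sub>m 0 (fst X v))" if "v \<in> verts Q" for v
    using exact_at[of v "Suc i"] that L Lg by (simp add: nth_append)
qed

lemma is_extI:
  assumes L: "length (fst e) = i" "length (snd e) = Suc i"
    and reps: "is_rep Q X" "is_rep Q Y" "\<And>j. j < i \<Longrightarrow> is_rep Q (fst e ! j)"
    and homs: "\<And>j. j < Suc i \<Longrightarrow> is_hom Q (ext_terms X Y e ! j) (ext_terms X Y e ! Suc j) (snd e ! j)"
    and mid: "\<And>v j. v \<in> verts Q \<Longrightarrow> 0 < j \<Longrightarrow> j \<le> i \<Longrightarrow> lin_exact ((snd e ! (j - 1)) v) ((snd e ! j) v)"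
    and first: "\<And>v. v \<in> verts Q \<Longrightarrow> lin_exact (0\<^sub>m (fst Y v) 0) ((snd e ! 0) v)"
    and last: "\<And>v. v \<in> verts Q \<Longrightarrow> lin_exact ((snd e ! i) v) (0\<^sub>m 0 (fst X v))"
  shows "is_ext Q i X Y e"
  unfolding is_ext_def exact_seq_def
proof (intro conjI ballI allI impI)
  show "length (fst e) = i" by fact
  show "length (ext_terms X Y e) = Suc (length (snd e))" using L by simp
  show "M \<in> set (ext_terms X Y e) \<Longrightarrow> is_rep Q M" for M
    using reps L by (auto simp: in_set_conv_nth)
  show "j < length (snd e) \<Longrightarrow> is_hom Q (ext_terms X Y e ! j) (ext_terms X Y e ! Suc j) (snd e ! j)" for j
    using homs L by simp
  fix v j assume v: "v \<in> verts Q" and j: "j < length (ext_terms X Y e)"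
  have "j \<le> Suc i" using j L by simp
  then consider "j = 0" | "j = Suc i" | "0 < j" "j \<le> i" by linarith
  thus "lin_exact (if j = 0 then 0\<^sub>m (fst (ext_terms X Y e ! 0) v) 0 else (snd e ! (j - 1)) v)
      (if j = length (snd e) then 0\<^sub>m 0 (fst (ext_terms X Y e ! j) v) else (snd e ! j) v)"
    by cases (use first[OF v] last[OF v] mid[OF v] L in \<open>auto simp: nth_append\<close>)
qed

lemma ext_mor_ext1I:
  assumes "is_ext Q 1 X Y ([E1], [g1, p1])" "is_ext Q 1 X Y ([E2], [g2, p2])" "is_hom Q E1 E2 h"
    "\<And>v. v \<in> verts Q \<Longrightarrow> h v * g1 v = g2 v * 1\<^sub>m (fst Y v)"
    "\<And>v. v \<in> verts Q \<Longrightarrow> 1\<^sub>m (fst X v) * p1 v = p2 v * h v"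
  shows "ext_mor Q 1 X Y ([E1], [g1, p1]) ([E2], [g2, p2])"
  unfolding ext_mor_def using assms
  by (intro conjI exI[of _ "[h]"]) (auto simp: less_Suc_eq id_mor_def)

lemma ext_mor_ext1D:
  assumes "ext_mor Q 1 X Y ([E1], [g1, p1]) ([E2], [g2, p2])"
  obtains h where "is_hom Q E1 E2 h" "\<And>v. v \<in> verts Q \<Longrightarrow> h v * g1 v = g2 v"
    "\<And>v. v \<in> verts Q \<Longrightarrow> p1 v = p2 v * h v"
proof -
  obtain hs where L: "length hs = 1" and hh: "is_hom Q E1 E2 (hs ! 0)"
    and sq: "\<And>j v. j < 2 \<Longrightarrow> v \<in> verts Q \<Longrightarrow> ((id_mor Y # hs @ [id_mor X]) ! Suc j) v * ([g1, p1] ! j) v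
        = ([g2, p2] ! j) v * ((id_mor Y # hs @ [id_mor X]) ! j) v"
    using assms unfolding ext_mor_def Let_def by auto
  obtain h where hs: "hs = [h]" using L by (cases hs) auto
  have g: "is_hom Q Y E2 g2" and p: "is_hom Q E1 X p1"
    using is_ext_homs[of Q 1 X Y "([E2], [g2, p2])" 0] is_ext_homs[of Q 1 X Y "([E1], [g1, p1])" 1]
      assms unfolding ext_mor_def by auto
  show ?thesis
  proof (rule that)
    show "is_hom Q E1 E2 h" using hh hs by simp
    show "h v * g1 v = g2 v" if v: "v \<in> verts Q" for v
      using sq[of 0 v] v is_hom_carrier[OF g v] by (simp add: hs id_mor_def)
    show "p1 v = p2 v * h v" if v: "v \<in> verts Q" for v
      using sq[of 1 v] v is_hom_carrier[OF p v] by (simp add: hs id_mor_def)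
  qed
qed

lemma is_ext1E:
  assumes e: "is_ext Q 1 X Y e"
  obtains E g p where "e = ([E], [g, p])" "is_rep Q E" "is_rep Q X" "is_rep Q Y"
    "is_hom Q Y E g" "is_hom Q E X p"
    "\<And>v. v \<in> verts Q \<Longrightarrow> lin_exact (0\<^sub>m (fst Y v) 0) (g v)"
    "\<And>v. v \<in> verts Q \<Longrightarrow> lin_exact (g v) (p v)"
    "\<And>v. v \<in> verts Q \<Longrightarrow> lin_exact (p v) (0\<^sub>m 0 (fst X v))"
proof -
  obtain E where E: "fst e = [E]" using is_ext_length(1)[OF e] by (cases "fst e") auto
  obtain g p where gp: "snd e = [g, p]" using is_ext_length(2)[OF e]
    by (cases "snd e"; cases "tl (snd e)") auto
  show ?thesis
  proof (rule that)
    show "e = ([E], [g, p])" using E gp by (cases e) auto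
    show "is_rep Q E" using is_ext_reps(3)[OF e, of 0] E by simp
    show "is_rep Q X" "is_rep Q Y" using is_ext_reps[OF e] by auto
    show "is_hom Q Y E g" using is_ext_homs[OF e, of 0] E gp by simp
    show "is_hom Q E X p" using is_ext_homs[OF e, of 1] E gp by simp
    show "lin_exact (0\<^sub>m (fst Y v) 0) (g v)" if "v \<in> verts Q" for v
      using is_ext_exact_first[OF e that] gp by simp
    show "lin_exact (g v) (p v)" if "v \<in> verts Q" for v
      using is_ext_exact[OF e that, of 1] gp by simp
    show "lin_exact (p v) (0\<^sub>m 0 (fst X v))" if "v \<in> verts Q" for v
      using is_ext_exact_last[OF e that] gp by simp
  qed
qed

definition twisted_sum :: "('v,'a,'k::field) rep \<Rightarrow> ('v,'a,'k) rep \<Rightarrow> ('a \<Rightarrow> 'k mat) \<Rightarrow> ('v,'a,'k) rep"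
  where "twisted_sum Y X D = (\<lambda>v. fst Y v + fst X v,
     \<lambda>b. four_block_mat (snd Y b) (D b) (0\<^sub>m (dim_row (snd X b)) (dim_col (snd Y b))) (snd X b))"

definition twisted_ext :: "('v,'a,'k::field) rep \<Rightarrow> ('v,'a,'k) rep \<Rightarrow> ('a \<Rightarrow> 'k mat) \<Rightarrow> ('v,'a,'k) extension"
  where "twisted_ext Y X D =
    ([twisted_sum Y X D], [\<lambda>v. incl1_mat (fst Y v) (fst X v), \<lambda>v. proj2_mat (fst Y v) (fst X v)])"

(* The cocycle condition says that the block matrices of twisted_sum compose to zero along
   every path of length two. *)
definition is_twist :: "('v,'a) quiver \<Rightarrow> ('v,'a,'k::field) rep \<Rightarrow> ('v,'a,'k) rep \<Rightarrow> ('a \<Rightarrow> 'k mat) \<Rightarrow> bool"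
  where "is_twist Q Y X D \<longleftrightarrow> (\<forall>b\<in>arrs Q. D b \<in> carrier_mat (fst Y (tgt Q b)) (fst X (src Q b))) \<and>
     (\<forall>b\<in>arrs Q. \<forall>c\<in>arrs Q. tgt Q b = src Q c \<longrightarrow>
        snd Y c * D b + D c * snd X b = 0\<^sub>m (fst Y (tgt Q c)) (fst X (src Q b)))"

definition zero_twist :: "('v,'a,'k::field) rep \<Rightarrow> ('v,'a,'k) rep \<Rightarrow> 'a \<Rightarrow> 'k mat" where
  "zero_twist Y X = (\<lambda>b. 0\<^sub>m (dim_row (snd Y b)) (dim_col (snd X b)))"

lemma is_twistD:
  assumes "is_twist Q Y X D" "b \<in> arrs Q"
  shows is_twist_carrier: "D b \<in> carrier_mat (fst Y (tgt Q b)) (fst X (src Q b))"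
    and is_twist_cocycle: "\<And>c. c \<in> arrs Q \<Longrightarrow> tgt Q b = src Q c \<Longrightarrow>
      snd Y c * D b + D c * snd X b = 0\<^sub>m (fst Y (tgt Q c)) (fst X (src Q b))"
  using assms unfolding is_twist_def by auto

lemma is_twist_zero_twist:
  assumes Y: "is_rep Q Y" and X: "is_rep Q X"
  shows "is_twist Q Y X (zero_twist Y X)"
  unfolding is_twist_def zero_twist_def
proof (intro conjI ballI impI)
  fix b assume b: "b \<in> arrs Q"
  show "0\<^sub>m (dim_row (snd Y b)) (dim_col (snd X b)) \<in> carrier_mat (fst Y (tgt Q b)) (fst X (src Q b))"
    using is_rep_carrier[OF Y b] is_rep_carrier[OF X b] by auto
  fix c assume c: "c \<in> arrs Q" and bc: "tgt Q b = src Q c"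
  show "snd Y c * 0\<^sub>m (dim_row (snd Y b)) (dim_col (snd X b)) + 0\<^sub>m (dim_row (snd Y c)) (dim_col (snd X c)) * snd X b
      = 0\<^sub>m (fst Y (tgt Q c)) (fst X (src Q b))"
    using is_rep_carrier[OF Y b] is_rep_carrier[OF X b] is_rep_carrier[OF Y c] is_rep_carrier[OF X c] bc
    by auto
qed

lemma twisted_sum_arr:
  assumes "is_rep Q Y" "is_rep Q X" "b \<in> arrs Q"
  shows "snd (twisted_sum Y X D) b =
    four_block_mat (snd Y b) (D b) (0\<^sub>m (fst X (tgt Q b)) (fst Y (src Q b))) (snd X b)"
  using is_rep_carrier[OF assms(1,3)] is_rep_carrier[OF assms(2,3)] by (simp add: twisted_sum_def)

lemma is_rep_twisted_sum:
  fixes X Y :: "('v,'a,'k::field) rep"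
  assumes Y: "is_rep Q Y" and X: "is_rep Q X" and D: "is_twist Q Y X D"
  shows "is_rep Q (twisted_sum Y X D)"
  unfolding is_rep_def
proof (intro conjI allI impI ballI)
  fix v assume "v \<notin> verts Q"
  thus "fst (twisted_sum Y X D) v = 0" using X Y by (simp add: twisted_sum_def is_rep_def)
next
  fix b assume b: "b \<in> arrs Q"
  show "snd (twisted_sum Y X D) b \<in>
      carrier_mat (fst (twisted_sum Y X D) (tgt Q b)) (fst (twisted_sum Y X D) (src Q b))"
    using is_rep_carrier[OF Y b] is_rep_carrier[OF X b] by (simp add: twisted_sum_def)
next
  fix b c assume b: "b \<in> arrs Q" and c: "c \<in> arrs Q" and bc: "tgt Q b = src Q c"
  note cYb = is_rep_carrier[OF Y b] and cXb = is_rep_carrier[OF X b]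
  note cYc = is_rep_carrier[OF Y c] and cXc = is_rep_carrier[OF X c]
  note Db = is_twist_carrier[OF D b] and Dc = is_twist_carrier[OF D c]
  have "snd (twisted_sum Y X D) c * snd (twisted_sum Y X D) b =
     four_block_mat (snd Y c * snd Y b + D c * 0\<^sub>m (fst X (src Q c)) (fst Y (src Q b)))
       (snd Y c * D b + D c * snd X b)
       (0\<^sub>m (fst X (tgt Q c)) (fst Y (src Q c)) * snd Y b + snd X c * 0\<^sub>m (fst X (src Q c)) (fst Y (src Q b)))
       (0\<^sub>m (fst X (tgt Q c)) (fst Y (src Q c)) * D b + snd X c * snd X b)"
    unfolding twisted_sum_arr[OF Y X b] twisted_sum_arr[OF Y X c] bc
    by (rule mult_four_block_mat) (use cYc Dc cXc cYb Db cXb bc in auto)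
  also have "\<dots> = 0\<^sub>m (fst Y (tgt Q c) + fst X (tgt Q c)) (fst Y (src Q b) + fst X (src Q b))"
    using is_rep_mult_zero[OF Y b c bc] is_rep_mult_zero[OF X b c bc] is_twist_cocycle[OF D b c bc]
      cYb cXb cYc cXc Db Dc bc by simp
  finally show "snd (twisted_sum Y X D) c * snd (twisted_sum Y X D) b
      = 0\<^sub>m (fst (twisted_sum Y X D) (tgt Q c)) (fst (twisted_sum Y X D) (src Q b))"
    by (simp add: twisted_sum_def)
qed

lemma is_hom_incl1_twisted_sum:
  fixes X Y :: "('v,'a,'k::field) rep"
  assumes Y: "is_rep Q Y" and X: "is_rep Q X" and D: "is_twist Q Y X D"
  shows "is_hom Q Y (twisted_sum Y X D) (\<lambda>v. incl1_mat (fst Y v) (fst X v))"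
  unfolding is_hom_def
proof (intro conjI ballI)
  fix b assume b: "b \<in> arrs Q"
  note cYb = is_rep_carrier[OF Y b] and cXb = is_rep_carrier[OF X b]
  note Db = is_twist_carrier[OF D b]
  let ?T = "snd (twisted_sum Y X D) b"
  have cT: "?T \<in> carrier_mat (fst Y (tgt Q b) + fst X (tgt Q b)) (fst Y (src Q b) + fst X (src Q b))"
    using cYb cXb by (simp add: twisted_sum_arr[OF Y X b])
  show "incl1_mat (fst Y (tgt Q b)) (fst X (tgt Q b)) * snd Y b = ?T * incl1_mat (fst Y (src Q b)) (fst X (src Q b))"
  proof (rule eq_matI)
    fix i j assume "i < dim_row (?T * incl1_mat (fst Y (src Q b)) (fst X (src Q b)) :: 'k mat)"
      "j < dim_col (?T * incl1_mat (fst Y (src Q b)) (fst X (src Q b)) :: 'k mat)"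
    hence i: "i < fst Y (tgt Q b) + fst X (tgt Q b)" and j: "j < fst Y (src Q b)" using cT by auto
    show "(incl1_mat (fst Y (tgt Q b)) (fst X (tgt Q b)) * snd Y b) $$ (i, j)
        = (?T * incl1_mat (fst Y (src Q b)) (fst X (src Q b))) $$ (i, j)"
      unfolding index_mult_incl1_mat_left[OF cYb i j] index_mult_incl1_mat_right[OF cT i j]
      using i j cYb cXb Db by (simp add: twisted_sum_arr[OF Y X b])
  qed (use cT cYb in auto)
qed (simp add: twisted_sum_def)

lemma is_hom_proj2_twisted_sum:
  fixes X Y :: "('v,'a,'k::field) rep"
  assumes Y: "is_rep Q Y" and X: "is_rep Q X" and D: "is_twist Q Y X D"
  shows "is_hom Q (twisted_sum Y X D) X (\<lambda>v. proj2_mat (fst Y v) (fst X v))"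
  unfolding is_hom_def
proof (intro conjI ballI)
  fix b assume b: "b \<in> arrs Q"
  note cYb = is_rep_carrier[OF Y b] and cXb = is_rep_carrier[OF X b]
  note Db = is_twist_carrier[OF D b]
  let ?T = "snd (twisted_sum Y X D) b"
  have cT: "?T \<in> carrier_mat (fst Y (tgt Q b) + fst X (tgt Q b)) (fst Y (src Q b) + fst X (src Q b))"
    using cYb cXb by (simp add: twisted_sum_arr[OF Y X b])
  show "proj2_mat (fst Y (tgt Q b)) (fst X (tgt Q b)) * ?T = snd X b * proj2_mat (fst Y (src Q b)) (fst X (src Q b))"
  proof (rule eq_matI)
    fix i j assume "i < dim_row (snd X b * proj2_mat (fst Y (src Q b)) (fst X (src Q b)) :: 'k mat)"
      "j < dim_col (snd X b * proj2_mat (fst Y (src Q b)) (fst X (src Q b)) :: 'k mat)"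
    hence i: "i < fst X (tgt Q b)" and j: "j < fst Y (src Q b) + fst X (src Q b)" using cXb by auto
    show "(proj2_mat (fst Y (tgt Q b)) (fst X (tgt Q b)) * ?T) $$ (i, j)
        = (snd X b * proj2_mat (fst Y (src Q b)) (fst X (src Q b))) $$ (i, j)"
      unfolding index_mult_proj2_mat_left[OF cT i j] index_mult_proj2_mat_right[OF cXb i j]
      using i j cYb cXb Db by (simp add: twisted_sum_arr[OF Y X b])
  qed (use cT cXb in auto)
qed (simp add: twisted_sum_def)

lemma twisted_ext_is_ext:
  assumes Y: "is_rep Q Y" and X: "is_rep Q X" and D: "is_twist Q Y X D"
  shows "is_ext Q 1 X Y (twisted_ext Y X D)"
proof (rule is_extI)
  show "is_hom Q (ext_terms X Y (twisted_ext Y X D) ! j) (ext_terms X Y (twisted_ext Y X D) ! Suc j)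
      (snd (twisted_ext Y X D) ! j)" if "j < Suc 1" for j
    using that is_hom_incl1_twisted_sum[OF Y X D] is_hom_proj2_twisted_sum[OF Y X D]
    by (auto simp: less_Suc_eq twisted_ext_def)
qed (use X Y is_rep_twisted_sum[OF Y X D] lin_exact_incl1_mat_proj2_mat lin_exact_zero_incl1_mat
    lin_exact_proj2_mat_zero in \<open>auto simp: twisted_ext_def\<close>)

lemma dsum_eq_twisted_sum: "dsum Y X = twisted_sum Y X (zero_twist Y X)"
  by (simp add: dsum_def twisted_sum_def zero_twist_def)

lemma dsum_dim: "fst (dsum Y X) v = fst Y v + fst X v"
  by (simp add: dsum_def)

lemma dsum_arr:
  assumes "is_rep Q Y" "is_rep Q X" "b \<in> arrs Q"
  shows "snd (dsum Y X) b = four_block_mat (snd Y b)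
    (0\<^sub>m (fst Y (tgt Q b)) (fst X (src Q b))) (0\<^sub>m (fst X (tgt Q b)) (fst Y (src Q b))) (snd X b)"
  using is_rep_carrier[OF assms(1,3)] is_rep_carrier[OF assms(2,3)] by (simp add: dsum_def)

lemma trivial_ext_1:
  "trivial_ext 1 X Y = ([dsum Y X], [\<lambda>v. incl1_mat (fst Y v) (fst X v), \<lambda>v. proj2_mat (fst Y v) (fst X v)])"
  by (simp add: trivial_ext_def incl1_mat_def proj2_mat_def)

lemma length_trivial_ext:
  assumes "2 \<le> i"
  shows "length (fst (trivial_ext i X Y)) = i" "length (snd (trivial_ext i X Y)) = Suc i"
  using assms unfolding trivial_ext_def Let_def by auto

lemma trivial_ext_terms:
  assumes "2 \<le> i" "j \<le> Suc i"
  shows "ext_terms X Y (trivial_ext i X Y) ! j = (if j \<le> 1 then Y else if i \<le> j then X else zero_rep)"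
proof -
  have T: "ext_terms X Y (trivial_ext i X Y) = Y # Y # replicate (i - 2) zero_rep @ [X, X]"
    using assms(1) unfolding trivial_ext_def Let_def by simp
  show ?thesis
    using assms unfolding T by (auto simp: nth_Cons' nth_append)
qed

lemma trivial_ext_maps:
  assumes "2 \<le> i" "j \<le> i"
  shows "snd (trivial_ext i X Y) ! j = (if j = 0 then id_mor Y else if j = i then id_mor X
     else zero_mor (ext_terms X Y (trivial_ext i X Y) ! j) (ext_terms X Y (trivial_ext i X Y) ! Suc j))"
proof -
  define Ms where "Ms = Y # replicate (i - 2) zero_rep @ [X]"
  have T: "trivial_ext i X Y = (Ms, id_mor Y # map (\<lambda>j. zero_mor (Ms ! j) (Ms ! Suc j)) [0..<i - 1] @ [id_mor X])"
    using assms unfolding trivial_ext_def Let_def Ms_def by auto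
  have "length Ms = i" using assms by (simp add: Ms_def)
  thus ?thesis using assms by (cases j) (auto simp: T nth_append)
qed

lemma trivial_ext_is_ext:
  assumes i: "1 \<le> i" and X: "is_rep Q X" and Y: "is_rep Q Y"
  shows "is_ext Q i X Y (trivial_ext i X Y)"
proof (cases "i = 1")
  case True
  have "is_ext Q 1 X Y (twisted_ext Y X (zero_twist Y X))"
    by (rule twisted_ext_is_ext[OF Y X is_twist_zero_twist[OF Y X]])
  hence "is_ext Q 1 X Y (trivial_ext 1 X Y)"
    by (simp only: trivial_ext_1 twisted_ext_def dsum_eq_twisted_sum)
  thus ?thesis using True by simp
next
  case False
  hence i: "2 \<le> i" using i by simp
  let ?T = "ext_terms X Y (trivial_ext i X Y)" and ?g = "snd (trivial_ext i X Y)"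
  have terms: "?T ! j = (if j \<le> 1 then Y else if i \<le> j then X else zero_rep)" if "j \<le> Suc i" for j
    by (rule trivial_ext_terms[OF i that])
  have maps: "?g ! j = (if j = 0 then id_mor Y else if j = i then id_mor X else zero_mor (?T ! j) (?T ! Suc j))"
    if "j \<le> i" for j
    by (rule trivial_ext_maps[OF i that])
  show ?thesis
  proof (rule is_extI)
    show "length (fst (trivial_ext i X Y)) = i" "length ?g = Suc i" by (rule length_trivial_ext[OF i])+
    have reps: "is_rep Q (?T ! j)" if "j \<le> Suc i" for j
      using terms[OF that] X Y is_rep_zero_rep by auto
    show "is_rep Q (fst (trivial_ext i X Y) ! j)" if "j < i" for j
      using reps[of "Suc j"] that length_trivial_ext(1)[OF i, of X Y] by (simp add: nth_append)
    show "is_hom Q (?T ! j) (?T ! Suc j) (?g ! j)" if "j < Suc i" for j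
      using that maps[of j] terms[of 0] terms[of 1] terms[of i] terms[of "Suc i"] i
        is_hom_id_mor[OF X] is_hom_id_mor[OF Y] is_hom_zero_mor[OF reps reps, of j "Suc j"] by auto
    show "lin_exact ((?g ! (j - 1)) v) ((?g ! j) v)" if "0 < j" "j \<le> i" for v j
      using that maps[of j] maps[of "j - 1"] terms[of j] terms[of 1] i
      by (cases "j = 1"; cases "j = i")
        (auto simp: id_mor_def zero_mor_def zero_rep_def lin_exact_zero_one lin_exact_one_zero lin_exact_zero_zero)
  qed (use X Y maps[of 0] maps[of i] i in \<open>auto simp: id_mor_def lin_exact_zero_one lin_exact_one_zero\<close>)
qed

section \<open>Ext vanishes at projectives and injectives\<close>

definition projective_rep :: "('v,'a) quiver \<Rightarrow> ('v,'a,'k::field) rep \<Rightarrow> bool" where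
  "projective_rep Q X \<longleftrightarrow> (\<forall>E p. is_rep Q E \<longrightarrow> is_hom Q E X p \<longrightarrow>
     (\<forall>v\<in>verts Q. \<forall>y\<in>carrier_vec (fst X v). \<exists>x\<in>carrier_vec (fst E v). p v *\<^sub>v x = y) \<longrightarrow>
     (\<exists>s. is_hom Q X E s \<and> (\<forall>v\<in>verts Q. p v * s v = 1\<^sub>m (fst X v))))"

definition injective_rep :: "('v,'a) quiver \<Rightarrow> ('v,'a,'k::field) rep \<Rightarrow> bool" where
  "injective_rep Q Y \<longleftrightarrow> (\<forall>E g. is_rep Q E \<longrightarrow> is_hom Q Y E g \<longrightarrow>
     (\<forall>v\<in>verts Q. \<forall>y\<in>carrier_vec (fst Y v). g v *\<^sub>v y = 0\<^sub>v (fst E v) \<longrightarrow> y = 0\<^sub>v (fst Y v)) \<longrightarrow>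
     (\<exists>r. is_hom Q E Y r \<and> (\<forall>v\<in>verts Q. r v * g v = 1\<^sub>m (fst Y v))))"

lemma projective_repD:
  assumes "projective_rep Q X" "is_rep Q E" "is_hom Q E X p"
    "\<And>v y. v \<in> verts Q \<Longrightarrow> y \<in> carrier_vec (fst X v) \<Longrightarrow> \<exists>x\<in>carrier_vec (fst E v). p v *\<^sub>v x = y"
  obtains s where "is_hom Q X E s" "\<forall>v\<in>verts Q. p v * s v = 1\<^sub>m (fst X v)"
  using assms unfolding projective_rep_def by blast

lemma injective_repD:
  assumes "injective_rep Q Y" "is_rep Q E" "is_hom Q Y E g"
    "\<And>v y. v \<in> verts Q \<Longrightarrow> y \<in> carrier_vec (fst Y v) \<Longrightarrow> g v *\<^sub>v y = 0\<^sub>v (fst E v) \<Longrightarrow> y = 0\<^sub>v (fst Y v)"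
  obtains r where "is_hom Q E Y r" "\<forall>v\<in>verts Q. r v * g v = 1\<^sub>m (fst Y v)"
  using assms unfolding injective_rep_def by blast

lemma is_ext_mult_zero:
  assumes e: "is_ext Q i X Y e" and v: "v \<in> verts Q" and j: "0 < j" "j \<le> i"
  shows "(snd e ! j) v * (snd e ! (j - 1)) v
    = 0\<^sub>m (fst (ext_terms X Y e ! Suc j) v) (fst (ext_terms X Y e ! (j - 1)) v)"
proof (rule lin_exact_mult_zero[OF is_ext_exact[OF e v j]])
  show "(snd e ! (j - 1)) v \<in> carrier_mat (fst (ext_terms X Y e ! j) v) (fst (ext_terms X Y e ! (j - 1)) v)"
    using is_hom_carrier[OF is_ext_homs[OF e, of "j - 1"] v] j by simp
  show "(snd e ! j) v \<in> carrier_mat (fst (ext_terms X Y e ! Suc j) v) (fst (ext_terms X Y e ! j) v)"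
    using is_hom_carrier[OF is_ext_homs[OF e, of j] v] j by simp
qed

lemma nth_Cons_append_single:
  assumes "length hs = i" "j \<le> Suc i"
  shows "(a # hs @ [b]) ! j = (if j = 0 then a else if j = Suc i then b else hs ! (j - 1))"
  using assms by (auto simp: nth_Cons' nth_append)

(* For i >= 2 the zero element is Y = Y -> 0 -> ... -> 0 -> X = X; it maps to e through the first
   map of e, zeros, and a section s of the last map of e. *)
lemma ext_mor_from_trivial_ext_ge2:
  assumes i: "2 \<le> i" and e: "is_ext Q i X Y e"
    and s: "is_hom Q X (fst e ! (i - 1)) s" and ps: "\<And>v. v \<in> verts Q \<Longrightarrow> (snd e ! i) v * s v = 1\<^sub>m (fst X v)"
  shows "ext_mor Q i X Y (trivial_ext i X Y) e"
proof -
  let ?E = "ext_terms X Y e" and ?g = "snd e" and ?T = "ext_terms X Y (trivial_ext i X Y)"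
  have LE: "length (fst e) = i" by (rule is_ext_length(1)[OF e])
  have E: "?E ! Suc j = fst e ! j" if "j < i" for j using that LE by (simp add: nth_append)
  have T: "?T ! j = (if j \<le> 1 then Y else if i \<le> j then X else zero_rep)" if "j \<le> Suc i" for j
    by (rule trivial_ext_terms[OF i that])
  have g: "is_hom Q (?E ! j) (?E ! Suc j) (?g ! j)" if "j < Suc i" for j by (rule is_ext_homs[OF e that])
  define hs where "hs = map (\<lambda>j. if j = 0 then ?g ! 0 else if j = i - 1 then s else zero_mor zero_rep (fst e ! j)) [0..<i]"
  have H: "(id_mor Y # hs @ [id_mor X]) ! j = (if j = 0 then id_mor Y else if j = 1 then ?g ! 0
      else if j = i then s else if j = Suc i then id_mor X else zero_mor zero_rep (fst e ! (j - 1)))"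
    if "j \<le> Suc i" for j
    using nth_Cons_append_single[of hs i j] that i by (auto simp: hs_def)
  show ?thesis
    unfolding ext_mor_def Let_def
  proof (intro conjI exI[of _ hs] allI impI ballI)
    show "is_ext Q i X Y (trivial_ext i X Y)"
      by (rule trivial_ext_is_ext) (use is_ext_reps[OF e] i in auto)
    show "is_hom Q (fst (trivial_ext i X Y) ! j) (fst e ! j) (hs ! j)" if j: "j < i" for j
    proof -
      have F: "fst (trivial_ext i X Y) ! j = ?T ! Suc j"
        using j length_trivial_ext(1)[OF i, of X Y] by (simp add: nth_append)
      have h: "hs ! j = (if j = 0 then ?g ! 0 else if j = i - 1 then s else zero_mor zero_rep (fst e ! j))"
        using j by (simp add: hs_def)
      consider "j = 0" | "j = i - 1" "j \<noteq> 0" | "j \<noteq> 0" "j \<noteq> i - 1" by blast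
      thus ?thesis
        by cases (use F h T[of "Suc j"] g[of 0] E[of 0] i j s
            is_hom_zero_mor[OF is_rep_zero_rep is_ext_reps(3)[OF e j]] in auto)
    qed
    fix j v assume j: "j < Suc i" and v: "v \<in> verts Q"
    have t: "snd (trivial_ext i X Y) ! j = (if j = 0 then id_mor Y else if j = i then id_mor X
        else zero_mor (?T ! j) (?T ! Suc j))"
      by (rule trivial_ext_maps[OF i]) (use j in simp)
    note cg = is_hom_carrier[OF g v]
    consider "j = 0" | "j = i" | "j = 1" "1 < i" | "1 < j" "j < i" using j i by linarith
    thus "((id_mor Y # hs @ [id_mor X]) ! Suc j) v * (snd (trivial_ext i X Y) ! j) v
        = (snd e ! j) v * ((id_mor Y # hs @ [id_mor X]) ! j) v"
    proof cases
      case 1 thus ?thesis using H[of 0] H[of 1] t cg[of 0] E[of 0] i by (simp add: id_mor_def)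
    next
      case 2 thus ?thesis using H[of i] H[of "Suc i"] t ps[OF v] is_hom_carrier[OF s v] cg[of i] E[of "i - 1"] i
        by (simp add: id_mor_def)
    next
      case 3 thus ?thesis using H[of 1] H[of 2] t T[of 1] T[of 2] is_ext_mult_zero[OF e v, of 1] E[of 0] E[of 1]
          is_hom_carrier[OF s v] cg[of 1]
        by (auto simp: zero_mor_def zero_rep_def numeral_2_eq_2)
    next
      case 4 thus ?thesis using H[of j] H[of "Suc j"] t T[of j] T[of "Suc j"] E[of j] E[of "j - 1"]
          is_hom_carrier[OF s v] cg[of j]
        by (auto simp: zero_mor_def zero_rep_def)
    qed
  qed (use e LE in \<open>simp_all add: hs_def\<close>)
qed

lemma ext_mor_to_trivial_ext_ge2:
  assumes i: "2 \<le> i" and e: "is_ext Q i X Y e"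
    and r: "is_hom Q (fst e ! 0) Y r" and rg: "\<And>v. v \<in> verts Q \<Longrightarrow> r v * (snd e ! 0) v = 1\<^sub>m (fst Y v)"
  shows "ext_mor Q i X Y e (trivial_ext i X Y)"
proof -
  let ?E = "ext_terms X Y e" and ?g = "snd e" and ?T = "ext_terms X Y (trivial_ext i X Y)"
  have LE: "length (fst e) = i" by (rule is_ext_length(1)[OF e])
  have E: "?E ! Suc j = fst e ! j" if "j < i" for j using that LE by (simp add: nth_append)
  have EX: "(fst e @ [X]) ! i = X" using LE by (simp add: nth_append)
  have T: "?T ! j = (if j \<le> 1 then Y else if i \<le> j then X else zero_rep)" if "j \<le> Suc i" for j
    by (rule trivial_ext_terms[OF i that])
  have g: "is_hom Q (?E ! j) (?E ! Suc j) (?g ! j)" if "j < Suc i" for j by (rule is_ext_homs[OF e that])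
  define hs where "hs = map (\<lambda>j. if j = 0 then r else if j = i - 1 then ?g ! i else zero_mor (fst e ! j) zero_rep) [0..<i]"
  have H: "(id_mor Y # hs @ [id_mor X]) ! j = (if j = 0 then id_mor Y else if j = 1 then r
      else if j = i then ?g ! i else if j = Suc i then id_mor X else zero_mor (fst e ! (j - 1)) zero_rep)"
    if "j \<le> Suc i" for j
    using nth_Cons_append_single[of hs i j] that i by (auto simp: hs_def)
  show ?thesis
    unfolding ext_mor_def Let_def
  proof (intro conjI exI[of _ hs] allI impI ballI)
    show "is_ext Q i X Y (trivial_ext i X Y)"
      by (rule trivial_ext_is_ext) (use is_ext_reps[OF e] i in auto)
    show "is_hom Q (fst e ! j) (fst (trivial_ext i X Y) ! j) (hs ! j)" if j: "j < i" for j
    proof -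
      have F: "fst (trivial_ext i X Y) ! j = ?T ! Suc j"
        using j length_trivial_ext(1)[OF i, of X Y] by (simp add: nth_append)
      have h: "hs ! j = (if j = 0 then r else if j = i - 1 then ?g ! i else zero_mor (fst e ! j) zero_rep)"
        using j by (simp add: hs_def)
      have last_map: "is_hom Q (fst e ! (i - 1)) X (?g ! i)"
        using g[of i] E[of "i - 1"] LE i by (simp add: nth_append)
      consider "j = 0" | "j = i - 1" "j \<noteq> 0" | "j \<noteq> 0" "j \<noteq> i - 1" by blast
      thus ?thesis
        by cases (use F h T[of "Suc j"] last_map i j r
            is_hom_zero_mor[OF is_ext_reps(3)[OF e j] is_rep_zero_rep] in auto)
    qed
    fix j v assume j: "j < Suc i" and v: "v \<in> verts Q"
    have t: "snd (trivial_ext i X Y) ! j = (if j = 0 then id_mor Y else if j = i then id_mor X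
        else zero_mor (?T ! j) (?T ! Suc j))"
      by (rule trivial_ext_maps[OF i]) (use j in simp)
    note cg = is_hom_carrier[OF g v]
    consider "j = 0" | "j = i" | "j = i - 1" "0 < j" | "0 < j" "j < i - 1" using j i by linarith
    thus "((id_mor Y # hs @ [id_mor X]) ! Suc j) v * (snd e ! j) v
        = (snd (trivial_ext i X Y) ! j) v * ((id_mor Y # hs @ [id_mor X]) ! j) v"
    proof cases
      case 1 thus ?thesis using H[of 0] H[of 1] t rg[OF v] i by (simp add: id_mor_def)
    next
      case 2 thus ?thesis using H[of i] H[of "Suc i"] t cg[of i] i by (simp add: id_mor_def)
    next
      case 3 thus ?thesis using H[of j] H[of "Suc j"] t T[of j] T[of "Suc j"] E[of "j - 1"] EX
          is_ext_mult_zero[OF e v, of i] is_hom_carrier[OF r v] cg[of j] i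
        by (auto simp: zero_mor_def zero_rep_def)
    next
      case 4 thus ?thesis using H[of j] H[of "Suc j"] t T[of j] T[of "Suc j"] E[of j] E[of "j - 1"]
          is_hom_carrier[OF r v] cg[of j]
        by (auto simp: zero_mor_def zero_rep_def)
    qed
  qed (use e LE in \<open>simp_all add: hs_def\<close>)
qed

lemma ext_mor_from_trivial_ext_1:
  assumes Q: "wf_quiver Q" and e: "is_ext Q 1 X Y ([E], [g, p])"
    and s: "is_hom Q X E s" and ps: "\<And>v. v \<in> verts Q \<Longrightarrow> p v * s v = 1\<^sub>m (fst X v)"
  shows "ext_mor Q 1 X Y (trivial_ext 1 X Y) ([E], [g, p])"
proof -
  obtain X: "is_rep Q X" and Y: "is_rep Q Y" and E: "is_rep Q E"
    and g: "is_hom Q Y E g" and p: "is_hom Q E X p"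
    and gp: "\<And>v. v \<in> verts Q \<Longrightarrow> lin_exact (g v) (p v)"
    by (rule is_ext1E[OF e]) auto
  define h where "h = (\<lambda>v. four_block_mat (g v) (s v) (0\<^sub>m 0 (fst Y v)) (0\<^sub>m 0 (fst X v)))"
  note cg = is_hom_carrier[OF g] and cs = is_hom_carrier[OF s] and cp = is_hom_carrier[OF p]
  have ch: "h v \<in> carrier_mat (fst E v) (fst Y v + fst X v)" if "v \<in> verts Q" for v
    using four_block_carrier_mat[OF cg[OF that] zero_carrier_mat[of 0 "fst X v"]] by (simp add: h_def)
  have hom: "is_hom Q (dsum Y X) E h"
    unfolding is_hom_def
  proof (intro conjI ballI)
    fix b assume b: "b \<in> arrs Q"
    have t: "tgt Q b \<in> verts Q" and sr: "src Q b \<in> verts Q" using wf_quiverD[OF Q b] by auto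
    note cYb = is_rep_carrier[OF Y b] and cXb = is_rep_carrier[OF X b] and cEb = is_rep_carrier[OF E b]
    have "h (tgt Q b) * snd (dsum Y X) b =
      four_block_mat (g (tgt Q b) * snd Y b) (s (tgt Q b) * snd X b) (0\<^sub>m 0 (fst Y (src Q b))) (0\<^sub>m 0 (fst X (src Q b)))"
      unfolding dsum_arr[OF Y X b] h_def
      by (subst mult_four_block_mat[OF cg[OF t] cs[OF t] zero_carrier_mat zero_carrier_mat cYb
            zero_carrier_mat zero_carrier_mat cXb]) (use cg[OF t] cs[OF t] cYb cXb in simp)
    also have "\<dots> = snd E b * h (src Q b)"
      unfolding h_def is_hom_comm[OF g b] is_hom_comm[OF s b]
      by (rule mult_row_block_mat[symmetric, OF cEb cg[OF sr] cs[OF sr]])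
    finally show "h (tgt Q b) * snd (dsum Y X) b = snd E b * h (src Q b)" .
  qed (use ch in \<open>simp add: dsum_dim\<close>)
  have sq1: "h v * incl1_mat (fst Y v) (fst X v) = g v * 1\<^sub>m (fst Y v)" if v: "v \<in> verts Q" for v
  proof (rule eq_matI)
    fix a c assume "a < dim_row (g v * 1\<^sub>m (fst Y v))" "c < dim_col (g v * 1\<^sub>m (fst Y v))"
    hence a: "a < fst E v" and c: "c < fst Y v" using cg[OF v] by auto
    show "(h v * incl1_mat (fst Y v) (fst X v)) $$ (a, c) = (g v * 1\<^sub>m (fst Y v)) $$ (a, c)"
      unfolding index_mult_incl1_mat_right[OF ch[OF v] a c] using a c cg[OF v] cs[OF v] by (simp add: h_def)
  qed (use cg[OF v] ch[OF v] in auto)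
  have sq2: "1\<^sub>m (fst X v) * proj2_mat (fst Y v) (fst X v) = p v * h v" if v: "v \<in> verts Q" for v
  proof -
    have "p v * h v = four_block_mat (p v * g v) (p v * s v) (0\<^sub>m 0 (fst Y v)) (0\<^sub>m 0 (fst X v))"
      unfolding h_def by (rule mult_row_block_mat[OF cp[OF v] cg[OF v] cs[OF v]])
    also have "\<dots> = proj2_mat (fst Y v) (fst X v)"
      using lin_exact_mult_zero[OF gp[OF v] cg[OF v] cp[OF v]] ps[OF v]
      by (intro eq_matI) (auto simp: proj2_mat_def)
    finally show ?thesis by simp
  qed
  have triv: "is_ext Q 1 X Y ([dsum Y X], [\<lambda>v. incl1_mat (fst Y v) (fst X v), \<lambda>v. proj2_mat (fst Y v) (fst X v)])"
    using trivial_ext_is_ext[OF order.refl X Y] unfolding trivial_ext_1 .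
  show ?thesis
    unfolding trivial_ext_1 by (rule ext_mor_ext1I[OF triv e hom sq1 sq2])
qed

lemma ext_mor_to_trivial_ext_1:
  assumes Q: "wf_quiver Q" and e: "is_ext Q 1 X Y ([E], [g, p])"
    and r: "is_hom Q E Y r" and rg: "\<And>v. v \<in> verts Q \<Longrightarrow> r v * g v = 1\<^sub>m (fst Y v)"
  shows "ext_mor Q 1 X Y ([E], [g, p]) (trivial_ext 1 X Y)"
proof -
  obtain X: "is_rep Q X" and Y: "is_rep Q Y" and E: "is_rep Q E"
    and g: "is_hom Q Y E g" and p: "is_hom Q E X p"
    and gp: "\<And>v. v \<in> verts Q \<Longrightarrow> lin_exact (g v) (p v)"
    by (rule is_ext1E[OF e]) auto
  define h where "h = (\<lambda>v. four_block_mat (r v) (0\<^sub>m (fst Y v) 0) (p v) (0\<^sub>m (fst X v) 0))"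
  note cg = is_hom_carrier[OF g] and cr = is_hom_carrier[OF r] and cp = is_hom_carrier[OF p]
  have ch: "h v \<in> carrier_mat (fst Y v + fst X v) (fst E v)" if "v \<in> verts Q" for v
    using four_block_carrier_mat[OF cr[OF that] zero_carrier_mat[of "fst X v" 0]] by (simp add: h_def)
  have hom: "is_hom Q E (dsum Y X) h"
    unfolding is_hom_def
  proof (intro conjI ballI)
    fix b assume b: "b \<in> arrs Q"
    have t: "tgt Q b \<in> verts Q" and sr: "src Q b \<in> verts Q" using wf_quiverD[OF Q b] by auto
    note cYb = is_rep_carrier[OF Y b] and cXb = is_rep_carrier[OF X b] and cEb = is_rep_carrier[OF E b]
    have "h (tgt Q b) * snd E b =
      four_block_mat (snd Y b * r (src Q b)) (0\<^sub>m (fst Y (tgt Q b)) 0) (snd X b * p (src Q b)) (0\<^sub>m (fst X (tgt Q b)) 0)"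
      unfolding h_def mult_col_block_mat[OF cEb cr[OF t] cp[OF t]] is_hom_comm[OF r b] is_hom_comm[OF p b] ..
    also have "\<dots> = snd (dsum Y X) b * h (src Q b)"
      unfolding dsum_arr[OF Y X b] h_def
      by (subst mult_four_block_mat[OF cYb zero_carrier_mat zero_carrier_mat cXb cr[OF sr] zero_carrier_mat
            cp[OF sr] zero_carrier_mat]) (use cr[OF sr] cp[OF sr] cYb cXb in simp)
    finally show "h (tgt Q b) * snd E b = snd (dsum Y X) b * h (src Q b)" .
  qed (use ch in \<open>simp add: dsum_dim\<close>)
  have sq1: "h v * g v = incl1_mat (fst Y v) (fst X v) * 1\<^sub>m (fst Y v)" if v: "v \<in> verts Q" for v
  proof -
    have "h v * g v = four_block_mat (r v * g v) (0\<^sub>m (fst Y v) 0) (p v * g v) (0\<^sub>m (fst X v) 0)"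
      unfolding h_def by (rule mult_col_block_mat[OF cg[OF v] cr[OF v] cp[OF v]])
    also have "\<dots> = incl1_mat (fst Y v) (fst X v)"
      using lin_exact_mult_zero[OF gp[OF v] cg[OF v] cp[OF v]] rg[OF v]
      by (intro eq_matI) (auto simp: incl1_mat_def)
    finally show ?thesis by simp
  qed
  have sq2: "1\<^sub>m (fst X v) * p v = proj2_mat (fst Y v) (fst X v) * h v" if v: "v \<in> verts Q" for v
  proof (rule eq_matI)
    fix a c assume "a < dim_row (proj2_mat (fst Y v) (fst X v) * h v)" "c < dim_col (proj2_mat (fst Y v) (fst X v) * h v)"
    hence a: "a < fst X v" and c: "c < fst E v" using ch[OF v] by auto
    show "(1\<^sub>m (fst X v) * p v) $$ (a, c) = (proj2_mat (fst Y v) (fst X v) * h v) $$ (a, c)"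
      unfolding index_mult_proj2_mat_left[OF ch[OF v] a c] using a c cr[OF v] cp[OF v] by (simp add: h_def)
  qed (use cp[OF v] ch[OF v] in auto)
  have triv: "is_ext Q 1 X Y ([dsum Y X], [\<lambda>v. incl1_mat (fst Y v) (fst X v), \<lambda>v. proj2_mat (fst Y v) (fst X v)])"
    using trivial_ext_is_ext[OF order.refl X Y] unfolding trivial_ext_1 .
  show ?thesis
    unfolding trivial_ext_1 by (rule ext_mor_ext1I[OF e triv hom sq1 sq2])
qed

lemma is_ext_first_map: "is_ext Q i X Y e \<Longrightarrow> 1 \<le> i \<Longrightarrow> is_hom Q Y (fst e ! 0) (snd e ! 0)"
  using is_ext_homs[of Q i X Y e 0] is_ext_length(1)[of Q i X Y e] by (simp add: nth_append)

lemma is_ext_last_map: "is_ext Q i X Y e \<Longrightarrow> 1 \<le> i \<Longrightarrow> is_hom Q (fst e ! (i - 1)) X (snd e ! i)"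
  using is_ext_homs[of Q i X Y e i] is_ext_length(1)[of Q i X Y e] by (simp add: nth_append nth_Cons')

lemma projective_rep_ext_vanishes:
  assumes Q: "wf_quiver Q" and P: "projective_rep Q X" and i: "1 \<le> i"
  shows "ext_vanishes Q i X Y"
  unfolding ext_vanishes_def yoneda_equiv_def
proof (intro allI impI)
  fix e assume e: "is_ext Q i X Y e"
  note p = is_ext_last_map[OF e i]
  obtain s where s: "is_hom Q X (fst e ! (i - 1)) s" and ps: "\<forall>v\<in>verts Q. (snd e ! i) v * s v = 1\<^sub>m (fst X v)"
  proof (rule projective_repD[OF P is_ext_reps(3)[OF e] p])
    show "\<exists>x\<in>carrier_vec (fst (fst e ! (i - 1)) v). (snd e ! i) v *\<^sub>v x = y"
      if "v \<in> verts Q" "y \<in> carrier_vec (fst X v)" for v y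
      by (rule lin_exact_zero_right_surjective[OF is_ext_exact_last[OF e that(1)] is_hom_carrier[OF p that(1)] that(2)])
  qed (use i in simp)
  have "ext_mor Q i X Y (trivial_ext i X Y) e"
  proof (cases "i = 1")
    case True
    with e have "is_ext Q 1 X Y e" by simp
    then obtain E g p where "e = ([E], [g, p])" by (rule is_ext1E)
    thus ?thesis using ext_mor_from_trivial_ext_1[OF Q _ _ ps[rule_format]] e s True by simp
  next
    case False
    thus ?thesis using ext_mor_from_trivial_ext_ge2[OF _ e s] ps i by simp
  qed
  thus "(\<lambda>e e'. ext_mor Q i X Y e e' \<or> ext_mor Q i X Y e' e)\<^sup>*\<^sup>* e (trivial_ext i X Y)"
    by (intro r_into_rtranclp) simp
qed

lemma injective_rep_ext_vanishes:
  assumes Q: "wf_quiver Q" and I: "injective_rep Q Y" and i: "1 \<le> i"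
  shows "ext_vanishes Q i X Y"
  unfolding ext_vanishes_def yoneda_equiv_def
proof (intro allI impI)
  fix e assume e: "is_ext Q i X Y e"
  note g = is_ext_first_map[OF e i]
  obtain r where r: "is_hom Q (fst e ! 0) Y r" and rg: "\<forall>v\<in>verts Q. r v * (snd e ! 0) v = 1\<^sub>m (fst Y v)"
  proof (rule injective_repD[OF I is_ext_reps(3)[OF e] g])
    show "y = 0\<^sub>v (fst Y v)"
      if "v \<in> verts Q" "y \<in> carrier_vec (fst Y v)" "(snd e ! 0) v *\<^sub>v y = 0\<^sub>v (fst (fst e ! 0) v)" for v y
      by (rule lin_exact_zero_left_injective[OF is_ext_exact_first[OF e that(1)] is_hom_carrier[OF g that(1)] that(2,3)])
  qed (use i in simp)
  have "ext_mor Q i X Y e (trivial_ext i X Y)"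
  proof (cases "i = 1")
    case True
    with e have "is_ext Q 1 X Y e" by simp
    then obtain E g p where "e = ([E], [g, p])" by (rule is_ext1E)
    thus ?thesis using ext_mor_to_trivial_ext_1[OF Q _ _ rg[rule_format]] e r True by simp
  next
    case False
    thus ?thesis using ext_mor_to_trivial_ext_ge2[OF _ e r] rg i by simp
  qed
  thus "(\<lambda>e e'. ext_mor Q i X Y e e' \<or> ext_mor Q i X Y e' e)\<^sup>*\<^sup>* e (trivial_ext i X Y)"
    by (intro r_into_rtranclp) simp
qed

section \<open>Split extensions\<close>

definition ext_splits :: "('v,'a) quiver \<Rightarrow> ('v,'a,'k::field) rep \<Rightarrow> ('v,'a,'k) extension \<Rightarrow> bool" where
  "ext_splits Q Y e \<longleftrightarrow>
     (\<exists>r. is_hom Q (fst e ! 0) Y r \<and> (\<forall>v\<in>verts Q. r v * (snd e ! 0) v = 1\<^sub>m (fst Y v)))"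

lemma is_hom_inverse:
  assumes Q: "wf_quiver Q" and M: "is_rep Q M" and N: "is_rep Q N" and h: "is_hom Q M N h"
    and L: "\<And>v. v \<in> verts Q \<Longrightarrow> L v \<in> carrier_mat (fst M v) (fst N v)"
    and Lh: "\<And>v. v \<in> verts Q \<Longrightarrow> L v * h v = 1\<^sub>m (fst M v)"
    and hL: "\<And>v. v \<in> verts Q \<Longrightarrow> h v * L v = 1\<^sub>m (fst N v)"
  shows "is_hom Q N M L"
  unfolding is_hom_def
proof (intro conjI ballI)
  fix b assume b: "b \<in> arrs Q"
  have t: "tgt Q b \<in> verts Q" and s: "src Q b \<in> verts Q" using wf_quiverD[OF Q b] by auto
  note cM = is_rep_carrier[OF M b] and cN = is_rep_carrier[OF N b]
  note Lt = L[OF t] and Ls = L[OF s] and ht = is_hom_carrier[OF h t] and hs = is_hom_carrier[OF h s]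
  have "L (tgt Q b) * snd N b = L (tgt Q b) * snd N b * (h (src Q b) * L (src Q b))"
    using hL[OF s] Lt cN by simp
  also have "\<dots> = L (tgt Q b) * (snd N b * h (src Q b)) * L (src Q b)"
    using assoc_mult_mat[OF Lt cN mult_carrier_mat[OF hs Ls]] assoc_mult_mat[OF Lt mult_carrier_mat[OF cN hs] Ls]
      assoc_mult_mat[OF cN hs Ls] by simp
  also have "snd N b * h (src Q b) = h (tgt Q b) * snd M b" using is_hom_comm[OF h b] by simp
  also have "L (tgt Q b) * (h (tgt Q b) * snd M b) * L (src Q b) = (L (tgt Q b) * h (tgt Q b)) * snd M b * L (src Q b)"
    using Lt ht cM by simp
  also have "\<dots> = snd M b * L (src Q b)" using Lh[OF t] cM by simp
  finally show "L (tgt Q b) * snd N b = snd M b * L (src Q b)" .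
qed (use L in simp)

lemma ext_mor_ext1_iso:
  assumes Q: "wf_quiver Q" and m: "ext_mor Q 1 X Y ([E1], [g1, p1]) ([E2], [g2, p2])"
  obtains h L where "is_hom Q E1 E2 h" "is_hom Q E2 E1 L"
    "\<And>v. v \<in> verts Q \<Longrightarrow> h v * g1 v = g2 v" "\<And>v. v \<in> verts Q \<Longrightarrow> L v * h v = 1\<^sub>m (fst E1 v)"
proof -
  have e1: "is_ext Q 1 X Y ([E1], [g1, p1])" and e2: "is_ext Q 1 X Y ([E2], [g2, p2])"
    using m unfolding ext_mor_def by auto
  obtain E1r: "is_rep Q E1" and Y: "is_rep Q Y" and g1: "is_hom Q Y E1 g1" and p1: "is_hom Q E1 X p1"
    and x11: "\<And>v. v \<in> verts Q \<Longrightarrow> lin_exact (g1 v) (p1 v)"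
    and x12: "\<And>v. v \<in> verts Q \<Longrightarrow> lin_exact (p1 v) (0\<^sub>m 0 (fst X v))"
    by (rule is_ext1E[OF e1]) auto
  obtain E2r: "is_rep Q E2" and g2: "is_hom Q Y E2 g2" and p2: "is_hom Q E2 X p2"
    and x20: "\<And>v. v \<in> verts Q \<Longrightarrow> lin_exact (0\<^sub>m (fst Y v) 0) (g2 v)"
    and x21: "\<And>v. v \<in> verts Q \<Longrightarrow> lin_exact (g2 v) (p2 v)"
    by (rule is_ext1E[OF e2]) auto
  obtain h where h: "is_hom Q E1 E2 h" and hg: "\<And>v. v \<in> verts Q \<Longrightarrow> h v * g1 v = g2 v"
    and ph: "\<And>v. v \<in> verts Q \<Longrightarrow> p1 v = p2 v * h v"
    by (rule ext_mor_ext1D[OF m]) blast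
  have "\<exists>L. L \<in> carrier_mat (fst E1 v) (fst E2 v) \<and> L * h v = 1\<^sub>m (fst E1 v) \<and> h v * L = 1\<^sub>m (fst E2 v)"
    if v: "v \<in> verts Q" for v
  proof (rule short_five_lemma_mat[OF is_hom_carrier[OF g1 v] is_hom_carrier[OF p1 v] is_hom_carrier[OF p2 v] is_hom_carrier[OF h v] hg[OF v] ph[OF v]])
    show "y = 0\<^sub>v (fst Y v)" if "y \<in> carrier_vec (fst Y v)" "g2 v *\<^sub>v y = 0\<^sub>v (fst E2 v)" for y
      by (rule lin_exact_zero_left_injective[OF x20[OF v] is_hom_carrier[OF g2 v] that])
    show "\<exists>y\<in>carrier_vec (fst Y v). g1 v *\<^sub>v y = x"
      if "x \<in> carrier_vec (fst E1 v)" "p1 v *\<^sub>v x = 0\<^sub>v (fst X v)" for x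
      by (rule lin_exact_kernel_image[OF x11[OF v] is_hom_carrier[OF g1 v] is_hom_carrier[OF p1 v] that])
    show "\<exists>y\<in>carrier_vec (fst Y v). g2 v *\<^sub>v y = w"
      if "w \<in> carrier_vec (fst E2 v)" "p2 v *\<^sub>v w = 0\<^sub>v (fst X v)" for w
      by (rule lin_exact_kernel_image[OF x21[OF v] is_hom_carrier[OF g2 v] is_hom_carrier[OF p2 v] that])
    show "\<exists>x\<in>carrier_vec (fst E1 v). p1 v *\<^sub>v x = z" if "z \<in> carrier_vec (fst X v)" for z
      by (rule lin_exact_zero_right_surjective[OF x12[OF v] is_hom_carrier[OF p1 v] that])
  qed blast
  then obtain L where L: "\<And>v. v \<in> verts Q \<Longrightarrow>
      L v \<in> carrier_mat (fst E1 v) (fst E2 v) \<and> L v * h v = 1\<^sub>m (fst E1 v) \<and> h v * L v = 1\<^sub>m (fst E2 v)"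
    by metis
  have "is_hom Q E2 E1 L"
    by (rule is_hom_inverse[OF Q E1r E2r h]) (use L in simp_all)
  thus ?thesis using that[OF h _ hg] L by simp
qed

lemma ext_splits_ext_mor:
  assumes Q: "wf_quiver Q" and m: "ext_mor Q 1 X Y e1 e2"
  shows "ext_splits Q Y e1 \<longleftrightarrow> ext_splits Q Y e2"
proof -
  obtain E1 g1 p1 where e1: "e1 = ([E1], [g1, p1])" and E1: "is_rep Q E1" and Y: "is_rep Q Y"
    and g1: "is_hom Q Y E1 g1"
    by (rule is_ext1E[of Q X Y e1]) (use m in \<open>auto simp: ext_mor_def\<close>)
  obtain E2 g2 p2 where e2: "e2 = ([E2], [g2, p2])" and E2: "is_rep Q E2" and g2: "is_hom Q Y E2 g2"
    by (rule is_ext1E[of Q X Y e2]) (use m in \<open>auto simp: ext_mor_def\<close>)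
  obtain h L where h: "is_hom Q E1 E2 h" and L: "is_hom Q E2 E1 L"
    and hg: "\<And>v. v \<in> verts Q \<Longrightarrow> h v * g1 v = g2 v" and Lh: "\<And>v. v \<in> verts Q \<Longrightarrow> L v * h v = 1\<^sub>m (fst E1 v)"
    by (rule ext_mor_ext1_iso[OF Q m[unfolded e1 e2]]) blast
  have transfer: "ext_splits Q Y ([E], [g, p])"
    if "is_rep Q E" "is_rep Q E'" "is_hom Q E E' k" "is_hom Q Y E g" "\<And>v. v \<in> verts Q \<Longrightarrow> g' v = k v * g v"
      "ext_splits Q Y ([E'], [g', p'])" for E E' k g g' p p'
  proof -
    from that(6) obtain r where r: "is_hom Q E' Y r" and rg: "\<forall>v\<in>verts Q. r v * g' v = 1\<^sub>m (fst Y v)"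
      unfolding ext_splits_def by auto
    show ?thesis
      unfolding ext_splits_def
    proof (intro exI conjI ballI)
      show "is_hom Q (fst ([E], [g, p]) ! 0) Y (\<lambda>v. r v * k v)"
        using is_hom_comp[OF Q that(1,2) Y that(3) r] by simp
      fix v assume v: "v \<in> verts Q"
      have "r v * k v * g v = r v * (k v * g v)"
        by (rule assoc_mult_mat[OF is_hom_carrier[OF r v] is_hom_carrier[OF that(3) v] is_hom_carrier[OF that(4) v]])
      also have "\<dots> = r v * g' v" using that(5)[OF v] by simp
      finally show "r v * k v * (snd ([E], [g, p]) ! 0) v = 1\<^sub>m (fst Y v)" using rg v by simp
    qed
  qed
  have Lg: "g1 v = L v * g2 v" if v: "v \<in> verts Q" for v
  proof -
    note cL = is_hom_carrier[OF L v] and ch = is_hom_carrier[OF h v] and cg = is_hom_carrier[OF g1 v]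
    have "L v * g2 v = L v * (h v * g1 v)" by (simp add: hg[OF v])
    also have "\<dots> = (L v * h v) * g1 v" by (rule assoc_mult_mat[symmetric, OF cL ch cg])
    finally show ?thesis using Lh[OF v] cg by simp
  qed
  show ?thesis
    unfolding e1 e2 using transfer[OF E1 E2 h g1 hg[symmetric]] transfer[OF E2 E1 L g2 Lg] by blast
qed

lemma ext_splits_yoneda_equiv:
  assumes Q: "wf_quiver Q" and y: "yoneda_equiv Q 1 X Y e e'"
  shows "ext_splits Q Y e \<longleftrightarrow> ext_splits Q Y e'"
  using y unfolding yoneda_equiv_def
proof (induction rule: rtranclp_induct)
  case (step b c)
  thus ?case using ext_splits_ext_mor[OF Q, of X Y b c] ext_splits_ext_mor[OF Q, of X Y c b] by blast
qed simp

lemma trivial_ext_splits: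
  fixes X Y :: "('v,'a,'k::field) rep"
  assumes Y: "is_rep Q Y" and X: "is_rep Q X"
  shows "ext_splits Q Y (trivial_ext 1 X Y)"
  unfolding ext_splits_def trivial_ext_1
proof (intro exI conjI ballI)
  show "is_hom Q (fst ([dsum Y X], [\<lambda>v. incl1_mat (fst Y v) (fst X v), \<lambda>v. proj2_mat (fst Y v) (fst X v)]) ! 0) Y
      (\<lambda>v. proj1_mat (fst Y v) (fst X v))"
    unfolding is_hom_def
    by (simp add: dsum_dim dsum_arr[OF Y X] proj1_mat_mult_block_diag is_rep_carrier[OF Y] is_rep_carrier[OF X])
qed (simp add: proj1_mat_mult_incl1_mat)

section \<open>The indecomposable projective and injective representations\<close>

definition arr_list :: "('v,'a) quiver \<Rightarrow> 'a list" where
  "arr_list Q = (SOME xs. set xs = arrs Q \<and> distinct xs)"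

(* Over kQ/J^2 the paths of length at most one form a basis.  At a vertex z, P_w has the paths
   from w to z as basis and I_v the (duals of the) paths from z to v; None stands for the
   trivial path and Some a for the arrow a. *)
definition proj_basis :: "('v,'a) quiver \<Rightarrow> 'v \<Rightarrow> 'v \<Rightarrow> 'a option list" where
  "proj_basis Q w z =
     (if z = w then [None] else []) @ map Some (filter (\<lambda>a. src Q a = w \<and> tgt Q a = z) (arr_list Q))"

definition inj_basis :: "('v,'a) quiver \<Rightarrow> 'v \<Rightarrow> 'v \<Rightarrow> 'a option list" where
  "inj_basis Q v z =
     (if z = v then [None] else []) @ map Some (filter (\<lambda>a. src Q a = z \<and> tgt Q a = v) (arr_list Q))"

definition proj_rep :: "('v,'a) quiver \<Rightarrow> 'v \<Rightarrow> ('v,'a,'k::field) rep" where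
  "proj_rep Q w = (\<lambda>z. if z \<in> verts Q then length (proj_basis Q w z) else 0,
     \<lambda>b. mat (length (proj_basis Q w (tgt Q b))) (length (proj_basis Q w (src Q b)))
        (\<lambda>(i,j). if proj_basis Q w (src Q b) ! j = None \<and> proj_basis Q w (tgt Q b) ! i = Some b then 1 else 0))"

definition inj_rep :: "('v,'a) quiver \<Rightarrow> 'v \<Rightarrow> ('v,'a,'k::field) rep" where
  "inj_rep Q v = (\<lambda>z. if z \<in> verts Q then length (inj_basis Q v z) else 0,
     \<lambda>b. mat (length (inj_basis Q v (tgt Q b))) (length (inj_basis Q v (src Q b)))
        (\<lambda>(i,j). if inj_basis Q v (src Q b) ! j = Some b \<and> inj_basis Q v (tgt Q b) ! i = None then 1 else 0))"

lemma arr_list: "finite (arrs Q) \<Longrightarrow> set (arr_list Q) = arrs Q \<and> distinct (arr_list Q)"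
  unfolding arr_list_def by (rule someI_ex) (rule finite_distinct_list)

lemma distinct_proj_basis: "finite (arrs Q) \<Longrightarrow> distinct (proj_basis Q w z)"
  using arr_list[of Q] by (auto simp: proj_basis_def distinct_map)

lemma distinct_inj_basis: "finite (arrs Q) \<Longrightarrow> distinct (inj_basis Q v z)"
  using arr_list[of Q] by (auto simp: inj_basis_def distinct_map)

lemma Some_in_proj_basis:
  "finite (arrs Q) \<Longrightarrow> Some a \<in> set (proj_basis Q w z) \<longleftrightarrow> a \<in> arrs Q \<and> src Q a = w \<and> tgt Q a = z"
  using arr_list[of Q] by (auto simp: proj_basis_def)

lemma Some_in_inj_basis:
  "finite (arrs Q) \<Longrightarrow> Some a \<in> set (inj_basis Q v z) \<longleftrightarrow> a \<in> arrs Q \<and> src Q a = z \<and> tgt Q a = v"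
  using arr_list[of Q] by (auto simp: inj_basis_def)

lemma proj_basis_self: "proj_basis Q w w ! 0 = None" "0 < length (proj_basis Q w w)"
  by (auto simp: proj_basis_def)

lemma inj_basis_self: "inj_basis Q v v ! 0 = None" "0 < length (inj_basis Q v v)"
  by (auto simp: inj_basis_def)

lemma proj_basis_nth_None:
  assumes "finite (arrs Q)" "i < length (proj_basis Q w z)"
  shows "proj_basis Q w z ! i = None \<longleftrightarrow> z = w \<and> i = 0"
proof -
  have "None \<in> set (proj_basis Q w z) \<longleftrightarrow> z = w" by (auto simp: proj_basis_def)
  thus ?thesis
    using assms nth_eq_iff_index_eq[OF distinct_proj_basis[OF assms(1)] assms(2), of 0] proj_basis_self
    by (metis nth_mem)
qed

lemma inj_basis_nth_None:
  assumes "finite (arrs Q)" "i < length (inj_basis Q v z)"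
  shows "inj_basis Q v z ! i = None \<longleftrightarrow> z = v \<and> i = 0"
proof -
  have "None \<in> set (inj_basis Q v z) \<longleftrightarrow> z = v" by (auto simp: inj_basis_def)
  thus ?thesis
    using assms nth_eq_iff_index_eq[OF distinct_inj_basis[OF assms(1)] assms(2), of 0] inj_basis_self
    by (metis nth_mem)
qed

lemma proj_basis_nth_Some: "finite (arrs Q) \<Longrightarrow> i < length (proj_basis Q w z) \<Longrightarrow>
    proj_basis Q w z ! i = Some a \<Longrightarrow> a \<in> arrs Q \<and> src Q a = w \<and> tgt Q a = z"
  using nth_mem Some_in_proj_basis by metis

lemma inj_basis_nth_Some: "finite (arrs Q) \<Longrightarrow> i < length (inj_basis Q v z) \<Longrightarrow>
    inj_basis Q v z ! i = Some a \<Longrightarrow> a \<in> arrs Q \<and> src Q a = z \<and> tgt Q a = v"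
  using nth_mem Some_in_inj_basis by metis

lemma distinct_nth_unique:
  assumes "distinct xs" "x \<in> set xs"
  obtains k where "k < length xs" "xs ! k = x" "\<And>m. m < length xs \<Longrightarrow> xs ! m = x \<longleftrightarrow> m = k"
  using assms by (metis in_set_conv_nth nth_eq_iff_index_eq)

lemma proj_rep_dim: "z \<in> verts Q \<Longrightarrow> fst (proj_rep Q w :: ('v,'a,'k::field) rep) z = length (proj_basis Q w z)"
  by (simp add: proj_rep_def)

lemma inj_rep_dim: "z \<in> verts Q \<Longrightarrow> fst (inj_rep Q v :: ('v,'a,'k::field) rep) z = length (inj_basis Q v z)"
  by (simp add: inj_rep_def)

lemma proj_rep_carrier: "snd (proj_rep Q w :: ('v,'a,'k::field) rep) b
    \<in> carrier_mat (length (proj_basis Q w (tgt Q b))) (length (proj_basis Q w (src Q b)))"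
  by (simp add: proj_rep_def)

lemma inj_rep_carrier: "snd (inj_rep Q v :: ('v,'a,'k::field) rep) b
    \<in> carrier_mat (length (inj_basis Q v (tgt Q b))) (length (inj_basis Q v (src Q b)))"
  by (simp add: inj_rep_def)

lemma proj_rep_entry: "i < length (proj_basis Q w (tgt Q b)) \<Longrightarrow> j < length (proj_basis Q w (src Q b)) \<Longrightarrow>
    snd (proj_rep Q w :: ('v,'a,'k::field) rep) b $$ (i, j) =
    (if proj_basis Q w (src Q b) ! j = None \<and> proj_basis Q w (tgt Q b) ! i = Some b then 1 else 0)"
  by (simp add: proj_rep_def)

lemma inj_rep_entry: "i < length (inj_basis Q v (tgt Q b)) \<Longrightarrow> j < length (inj_basis Q v (src Q b)) \<Longrightarrow>
    snd (inj_rep Q v :: ('v,'a,'k::field) rep) b $$ (i, j) =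
    (if inj_basis Q v (src Q b) ! j = Some b \<and> inj_basis Q v (tgt Q b) ! i = None then 1 else 0)"
  by (simp add: inj_rep_def)

lemma is_rep_proj_rep:
  assumes Q: "wf_quiver Q"
  shows "is_rep Q (proj_rep Q w :: ('v,'a,'k::field) rep)"
  unfolding is_rep_def
proof (intro conjI allI impI ballI)
  fix b c assume b: "b \<in> arrs Q" and c: "c \<in> arrs Q" and bc: "tgt Q b = src Q c"
  have "tgt Q c \<in> verts Q" "src Q b \<in> verts Q" using wf_quiverD[OF Q] b c by auto
  thus "snd (proj_rep Q w :: ('v,'a,'k) rep) c * snd (proj_rep Q w) b
      = 0\<^sub>m (fst (proj_rep Q w :: ('v,'a,'k) rep) (tgt Q c)) (fst (proj_rep Q w :: ('v,'a,'k) rep) (src Q b))"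
    unfolding proj_rep_def fst_conv snd_conv
    by (intro mult_eq_zero_matI[where n = "length (proj_basis Q w (src Q c))"]) (auto simp: bc)
qed (use wf_quiverD[OF Q] in \<open>auto simp: proj_rep_def\<close>)

lemma is_rep_inj_rep:
  assumes Q: "wf_quiver Q"
  shows "is_rep Q (inj_rep Q v :: ('v,'a,'k::field) rep)"
  unfolding is_rep_def
proof (intro conjI allI impI ballI)
  fix b c assume b: "b \<in> arrs Q" and c: "c \<in> arrs Q" and bc: "tgt Q b = src Q c"
  have "tgt Q c \<in> verts Q" "src Q b \<in> verts Q" using wf_quiverD[OF Q] b c by auto
  thus "snd (inj_rep Q v :: ('v,'a,'k) rep) c * snd (inj_rep Q v) b
      = 0\<^sub>m (fst (inj_rep Q v :: ('v,'a,'k) rep) (tgt Q c)) (fst (inj_rep Q v :: ('v,'a,'k) rep) (src Q b))"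
    unfolding inj_rep_def fst_conv snd_conv
    by (intro mult_eq_zero_matI[where n = "length (inj_basis Q v (src Q c))"]) (auto simp: bc)
qed (use wf_quiverD[OF Q] in \<open>auto simp: inj_rep_def\<close>)

(* The morphism P_w -> E sending the trivial path to the element e of E at w. *)
definition proj_rep_hom :: "('v,'a) quiver \<Rightarrow> 'v \<Rightarrow> ('v,'a,'k::field) rep \<Rightarrow> 'k vec \<Rightarrow> ('v,'k) rmor" where
  "proj_rep_hom Q w E e = (\<lambda>z. mat (fst E z) (if z \<in> verts Q then length (proj_basis Q w z) else 0)
     (\<lambda>(i,j). case proj_basis Q w z ! j of None \<Rightarrow> e $ i | Some a \<Rightarrow> (snd E a *\<^sub>v e) $ i))"

lemma col_proj_rep_hom:
  assumes fa: "finite (arrs Q)" and E: "is_rep Q E" and e: "e \<in> carrier_vec (fst E w)"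
    and z: "z \<in> verts Q" and j: "j < length (proj_basis Q w z)"
  shows "col (proj_rep_hom Q w E e z) j = (case proj_basis Q w z ! j of None \<Rightarrow> e | Some a \<Rightarrow> snd E a *\<^sub>v e)"
proof (cases "proj_basis Q w z ! j")
  case None
  hence "z = w" using proj_basis_nth_None[OF fa j] by simp
  thus ?thesis using None e j z by (intro eq_vecI) (auto simp: proj_rep_hom_def)
next
  case (Some a)
  hence "a \<in> arrs Q" "tgt Q a = z" using proj_basis_nth_Some[OF fa j] by auto
  hence "dim_row (snd E a) = fst E z" using is_rep_carrier[OF E] by auto
  thus ?thesis using Some e j z by (intro eq_vecI) (auto simp: proj_rep_hom_def)
qed

lemma is_hom_proj_rep_hom:
  assumes Q: "finite_quiver Q" and E: "is_rep Q E" and e: "e \<in> carrier_vec (fst E w)"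
  shows "is_hom Q (proj_rep Q w :: ('v,'a,'k::field) rep) E (proj_rep_hom Q w E e)"
  unfolding is_hom_def
proof (intro conjI ballI)
  let ?P = "proj_rep Q w :: ('v,'a,'k) rep" and ?s = "proj_rep_hom Q w E e"
  have fa: "finite (arrs Q)" using Q by (simp add: finite_quiver_def)
  fix b assume b: "b \<in> arrs Q"
  have t: "tgt Q b \<in> verts Q" and sr: "src Q b \<in> verts Q" using wf_quiverD[OF finite_quiver_wf[OF Q] b] by auto
  note cEb = is_rep_carrier[OF E b] and cPb = proj_rep_carrier[of Q w b, where 'k='k]
  have cst: "?s (tgt Q b) \<in> carrier_mat (fst E (tgt Q b)) (length (proj_basis Q w (tgt Q b)))"
    and css: "?s (src Q b) \<in> carrier_mat (fst E (src Q b)) (length (proj_basis Q w (src Q b)))"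
    using t sr by (simp_all add: proj_rep_hom_def)
  show "?s (tgt Q b) * snd ?P b = snd E b * ?s (src Q b)"
  proof (rule eq_matI)
    fix i j assume "i < dim_row (snd E b * ?s (src Q b))" "j < dim_col (snd E b * ?s (src Q b))"
    hence i: "i < fst E (tgt Q b)" and j: "j < length (proj_basis Q w (src Q b))" using cEb css by auto
    have rhs: "(snd E b * ?s (src Q b)) $$ (i, j) = row (snd E b) i \<bullet> col (?s (src Q b)) j"
      using cEb css i j by simp
    show "(?s (tgt Q b) * snd ?P b) $$ (i, j) = (snd E b * ?s (src Q b)) $$ (i, j)"
    proof (cases "proj_basis Q w (src Q b) ! j")
      case None
      hence "src Q b = w" using proj_basis_nth_None[OF fa j] by simp
      hence "Some b \<in> set (proj_basis Q w (tgt Q b))" using Some_in_proj_basis[OF fa] b by simp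
      then obtain kb where kb: "kb < length (proj_basis Q w (tgt Q b))" "proj_basis Q w (tgt Q b) ! kb = Some b"
        and ku: "\<And>m. m < length (proj_basis Q w (tgt Q b)) \<Longrightarrow> proj_basis Q w (tgt Q b) ! m = Some b \<longleftrightarrow> m = kb"
        by (rule distinct_nth_unique[OF distinct_proj_basis[OF fa]]) blast
      have "(?s (tgt Q b) * snd ?P b) $$ (i, j) = ?s (tgt Q b) $$ (i, kb)"
        by (rule index_mult_unit_col[OF cst cPb i j kb(1)]) (use None ku j in \<open>simp add: proj_rep_entry\<close>)
      also have "\<dots> = row (snd E b) i \<bullet> e" using kb i t cEb by (simp add: proj_rep_hom_def)
      finally show ?thesis unfolding rhs col_proj_rep_hom[OF fa E e sr j] using None by simp
    next
      case (Some a)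
      hence a: "a \<in> arrs Q" "tgt Q a = src Q b" "src Q a = w" using proj_basis_nth_Some[OF fa j] by auto
      note cEa = is_rep_carrier[OF E a(1)]
      have "(?s (tgt Q b) * snd ?P b) $$ (i, j) = 0"
        by (rule index_mult_zero_col[OF cst cPb i j]) (use Some j in \<open>simp add: proj_rep_entry\<close>)
      moreover have "row (snd E b) i \<bullet> (snd E a *\<^sub>v e) = 0"
      proof -
        have "row (snd E b) i \<bullet> (snd E a *\<^sub>v e) = (snd E b *\<^sub>v (snd E a *\<^sub>v e)) $ i" using cEb i by simp
        also have "snd E b *\<^sub>v (snd E a *\<^sub>v e) = (snd E b * snd E a) *\<^sub>v e" using cEb cEa e a by simp
        also have "\<dots> = 0\<^sub>v (fst E (tgt Q b))" using is_rep_mult_zero[OF E a(1) b a(2)] e a by simp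
        finally show ?thesis using i by simp
      qed
      ultimately show ?thesis unfolding rhs col_proj_rep_hom[OF fa E e sr j] using Some by simp
    qed
  qed (use cst cPb cEb css in auto)
qed (simp add: proj_rep_hom_def proj_rep_def)

lemma proj_rep_hom_right_inverse:
  assumes fa: "finite (arrs Q)" and E: "is_rep Q E" and w: "w \<in> verts Q"
    and p: "is_hom Q E (proj_rep Q w :: ('v,'a,'k::field) rep) p"
    and e: "e \<in> carrier_vec (fst E w)" and pe: "p w *\<^sub>v e = unit_vec (length (proj_basis Q w w)) 0"
    and z: "z \<in> verts Q"
  shows "p z * proj_rep_hom Q w E e z = 1\<^sub>m (fst (proj_rep Q w :: ('v,'a,'k) rep) z)"
proof -
  let ?P = "proj_rep Q w :: ('v,'a,'k) rep" and ?s = "proj_rep_hom Q w E e"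
  have cp: "p z \<in> carrier_mat (length (proj_basis Q w z)) (fst E z)"
    using is_hom_carrier[OF p z] proj_rep_dim[OF z] by metis
  have cs: "?s z \<in> carrier_mat (fst E z) (length (proj_basis Q w z))" using z by (simp add: proj_rep_hom_def)
  have dz: "fst ?P z = length (proj_basis Q w z)" by (rule proj_rep_dim[OF z])
  have entry: "(p z *\<^sub>v col (?s z) j) $ i = (if i = j then 1 else 0)"
    if i: "i < length (proj_basis Q w z)" and j: "j < length (proj_basis Q w z)" for i j
  proof (cases "proj_basis Q w z ! j")
    case None
    hence "z = w" "j = 0" using proj_basis_nth_None[OF fa j] by auto
    thus ?thesis using None pe i proj_basis_self(2)[of Q w] unfolding col_proj_rep_hom[OF fa E e z j] by auto
  next
    case (Some a)
    hence a: "a \<in> arrs Q" "src Q a = w" "tgt Q a = z" using proj_basis_nth_Some[OF fa j] by auto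
    have cEa: "snd E a \<in> carrier_mat (fst E z) (fst E w)" using is_rep_carrier[OF E a(1)] a by simp
    have cPa: "snd ?P a \<in> carrier_mat (length (proj_basis Q w z)) (length (proj_basis Q w w))"
      using proj_rep_carrier[of Q w a] a by simp
    have cpw: "p w \<in> carrier_mat (length (proj_basis Q w w)) (fst E w)"
      using is_hom_carrier[OF p w] proj_rep_dim[OF w] by metis
    have "p z *\<^sub>v (snd E a *\<^sub>v e) = (p z * snd E a) *\<^sub>v e" using cp cEa e by simp
    also have "p z * snd E a = snd ?P a * p w" using is_hom_comm[OF p a(1)] a by simp
    also have "(snd ?P a * p w) *\<^sub>v e = col (snd ?P a) 0"
      using cPa cpw e pe mult_mat_vec_unit[OF cPa proj_basis_self(2)] by simp
    finally have "(p z *\<^sub>v (snd E a *\<^sub>v e)) $ i = snd ?P a $$ (i, 0)"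
      using cPa i proj_basis_self(2)[of Q w] by simp
    also have "\<dots> = (if proj_basis Q w z ! i = Some a then 1 else 0)"
      using i a proj_basis_self[of Q w] by (simp add: proj_rep_entry)
    also have "\<dots> = (if i = j then 1 else 0)"
      using nth_eq_iff_index_eq[OF distinct_proj_basis[OF fa] i j] Some by simp
    finally show ?thesis unfolding col_proj_rep_hom[OF fa E e z j] using Some by simp
  qed
  show ?thesis
  proof (rule eq_matI)
    fix i j assume "i < dim_row (1\<^sub>m (fst ?P z) :: 'k mat)" "j < dim_col (1\<^sub>m (fst ?P z) :: 'k mat)"
    hence i: "i < length (proj_basis Q w z)" and j: "j < length (proj_basis Q w z)" using dz by auto
    show "(p z * ?s z) $$ (i, j) = 1\<^sub>m (fst ?P z) $$ (i, j)"
      using entry[OF i j] cp cs i j dz by simp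
  qed (use cp cs dz in auto)
qed

lemma projective_rep_proj_rep:
  assumes Q: "finite_quiver Q" and w: "w \<in> verts Q"
  shows "projective_rep Q (proj_rep Q w :: ('v,'a,'k::field) rep)"
  unfolding projective_rep_def
proof (intro allI impI)
  fix E :: "('v,'a,'k) rep" and p
  assume E: "is_rep Q E" and p: "is_hom Q E (proj_rep Q w) p"
    and surj: "\<forall>v\<in>verts Q. \<forall>y\<in>carrier_vec (fst (proj_rep Q w :: ('v,'a,'k) rep) v).
      \<exists>x\<in>carrier_vec (fst E v). p v *\<^sub>v x = y"
  have fa: "finite (arrs Q)" using Q by (simp add: finite_quiver_def)
  obtain e where e: "e \<in> carrier_vec (fst E w)" and pe: "p w *\<^sub>v e = unit_vec (length (proj_basis Q w w)) 0"
    using surj w proj_rep_dim[OF w, of w] by (metis unit_vec_carrier)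
  show "\<exists>s. is_hom Q (proj_rep Q w) E s \<and> (\<forall>v\<in>verts Q. p v * s v = 1\<^sub>m (fst (proj_rep Q w :: ('v,'a,'k) rep) v))"
    using is_hom_proj_rep_hom[OF Q E e] proj_rep_hom_right_inverse[OF fa E w p e pe] by blast
qed

(* Dually, the first row of L, a linear form on E at v, determines a morphism E -> I_v. *)
definition inj_rep_hom :: "('v,'a) quiver \<Rightarrow> 'v \<Rightarrow> ('v,'a,'k::field) rep \<Rightarrow> 'k mat \<Rightarrow> ('v,'k) rmor" where
  "inj_rep_hom Q v E L = (\<lambda>z. mat (if z \<in> verts Q then length (inj_basis Q v z) else 0) (fst E z)
     (\<lambda>(i,k). case inj_basis Q v z ! i of None \<Rightarrow> L $$ (0,k) | Some a \<Rightarrow> (L * snd E a) $$ (0,k)))"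

lemma row_inj_rep_hom:
  assumes fa: "finite (arrs Q)" and E: "is_rep Q E" and L: "L \<in> carrier_mat n (fst E v)" and n: "0 < n"
    and z: "z \<in> verts Q" and i: "i < length (inj_basis Q v z)"
  shows "row (inj_rep_hom Q v E L z) i = (case inj_basis Q v z ! i of None \<Rightarrow> row L 0 | Some a \<Rightarrow> row (L * snd E a) 0)"
proof (cases "inj_basis Q v z ! i")
  case None
  hence "z = v" using inj_basis_nth_None[OF fa i] by simp
  thus ?thesis using None L n i z by (intro eq_vecI) (auto simp: inj_rep_hom_def)
next
  case (Some a)
  hence "a \<in> arrs Q" "src Q a = z" "tgt Q a = v" using inj_basis_nth_Some[OF fa i] by auto
  hence "snd E a \<in> carrier_mat (fst E v) (fst E z)" using is_rep_carrier[OF E] by auto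
  thus ?thesis using Some L n i z by (intro eq_vecI) (auto simp: inj_rep_hom_def)
qed

lemma is_hom_inj_rep_hom:
  assumes Q: "finite_quiver Q" and E: "is_rep Q E" and L: "L \<in> carrier_mat n (fst E v)" and n: "0 < n"
  shows "is_hom Q E (inj_rep Q v :: ('v,'a,'k::field) rep) (inj_rep_hom Q v E L)"
  unfolding is_hom_def
proof (intro conjI ballI)
  let ?I = "inj_rep Q v :: ('v,'a,'k) rep" and ?r = "inj_rep_hom Q v E L"
  have fa: "finite (arrs Q)" using Q by (simp add: finite_quiver_def)
  fix b assume b: "b \<in> arrs Q"
  have t: "tgt Q b \<in> verts Q" and sr: "src Q b \<in> verts Q" using wf_quiverD[OF finite_quiver_wf[OF Q] b] by auto
  note cEb = is_rep_carrier[OF E b] and cIb = inj_rep_carrier[of Q v b, where 'k='k]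
  have crt: "?r (tgt Q b) \<in> carrier_mat (length (inj_basis Q v (tgt Q b))) (fst E (tgt Q b))"
    and crs: "?r (src Q b) \<in> carrier_mat (length (inj_basis Q v (src Q b))) (fst E (src Q b))"
    using t sr by (simp_all add: inj_rep_hom_def)
  show "?r (tgt Q b) * snd E b = snd ?I b * ?r (src Q b)"
  proof (rule eq_matI)
    fix i k assume "i < dim_row (snd ?I b * ?r (src Q b))" "k < dim_col (snd ?I b * ?r (src Q b))"
    hence i: "i < length (inj_basis Q v (tgt Q b))" and k: "k < fst E (src Q b)" using cIb crs by auto
    have lhs: "(?r (tgt Q b) * snd E b) $$ (i, k) = row (?r (tgt Q b)) i \<bullet> col (snd E b) k"
      using cEb crt i k by simp
    show "(?r (tgt Q b) * snd E b) $$ (i, k) = (snd ?I b * ?r (src Q b)) $$ (i, k)"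
    proof (cases "inj_basis Q v (tgt Q b) ! i")
      case None
      hence tv: "tgt Q b = v" using inj_basis_nth_None[OF fa i] by simp
      hence "Some b \<in> set (inj_basis Q v (src Q b))" using Some_in_inj_basis[OF fa] b by simp
      then obtain mb where mb: "mb < length (inj_basis Q v (src Q b))" "inj_basis Q v (src Q b) ! mb = Some b"
        and mu: "\<And>m. m < length (inj_basis Q v (src Q b)) \<Longrightarrow> inj_basis Q v (src Q b) ! m = Some b \<longleftrightarrow> m = mb"
        by (rule distinct_nth_unique[OF distinct_inj_basis[OF fa]]) blast
      have "(snd ?I b * ?r (src Q b)) $$ (i, k) = ?r (src Q b) $$ (mb, k)"
        by (rule index_mult_unit_row[OF cIb crs i k mb(1)]) (use None mu i in \<open>simp add: inj_rep_entry\<close>)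
      also have "\<dots> = row L 0 \<bullet> col (snd E b) k" using mb k sr L n cEb tv by (simp add: inj_rep_hom_def)
      finally show ?thesis unfolding lhs row_inj_rep_hom[OF fa E L n t i] using None by simp
    next
      case (Some a)
      hence a: "a \<in> arrs Q" "src Q a = tgt Q b" "tgt Q a = v" using inj_basis_nth_Some[OF fa i] by auto
      have cEa: "snd E a \<in> carrier_mat (fst E v) (fst E (tgt Q b))" using is_rep_carrier[OF E a(1)] a by simp
      have "(snd ?I b * ?r (src Q b)) $$ (i, k) = 0"
        by (rule index_mult_zero_row[OF cIb crs i k]) (use Some i in \<open>simp add: inj_rep_entry\<close>)
      moreover have "row (L * snd E a) 0 \<bullet> col (snd E b) k = 0"
      proof -
        have "row (L * snd E a) 0 \<bullet> col (snd E b) k = ((L * snd E a) * snd E b) $$ (0, k)"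
          by (rule sym, rule index_mult_mat(1)) (use L cEa cEb k n in auto)
        also have "(L * snd E a) * snd E b = L * (snd E a * snd E b)" using L cEa cEb by simp
        also have "\<dots> = 0\<^sub>m n (fst E (src Q b))" using is_rep_mult_zero[OF E b a(1) a(2)[symmetric]] L a by simp
        finally show ?thesis using k n by simp
      qed
      ultimately show ?thesis unfolding lhs row_inj_rep_hom[OF fa E L n t i] using Some by simp
    qed
  qed (use crt cIb cEb crs in auto)
qed (simp add: inj_rep_hom_def inj_rep_def)

lemma inj_rep_hom_left_inverse:
  assumes fa: "finite (arrs Q)" and E: "is_rep Q E" and v: "v \<in> verts Q"
    and g: "is_hom Q (inj_rep Q v :: ('v,'a,'k::field) rep) E g"
    and L: "L \<in> carrier_mat (length (inj_basis Q v v)) (fst E v)" and Lg: "L * g v = 1\<^sub>m (length (inj_basis Q v v))"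
    and z: "z \<in> verts Q"
  shows "inj_rep_hom Q v E L z * g z = 1\<^sub>m (fst (inj_rep Q v :: ('v,'a,'k) rep) z)"
proof -
  let ?I = "inj_rep Q v :: ('v,'a,'k) rep" and ?r = "inj_rep_hom Q v E L"
  note n = inj_basis_self(2)[of Q v]
  have dz: "fst ?I z = length (inj_basis Q v z)" by (rule inj_rep_dim[OF z])
  have cg: "g z \<in> carrier_mat (fst E z) (length (inj_basis Q v z))" using is_hom_carrier[OF g z] dz by metis
  have cgv: "g v \<in> carrier_mat (fst E v) (length (inj_basis Q v v))"
    using is_hom_carrier[OF g v] inj_rep_dim[OF v] by metis
  have cr: "?r z \<in> carrier_mat (length (inj_basis Q v z)) (fst E z)" using z by (simp add: inj_rep_hom_def)
  have entry: "row (?r z) i \<bullet> col (g z) j = (if i = j then 1 else 0)"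
    if i: "i < length (inj_basis Q v z)" and j: "j < length (inj_basis Q v z)" for i j
  proof (cases "inj_basis Q v z ! i")
    case None
    hence zi: "z = v" "i = 0" using inj_basis_nth_None[OF fa i] by auto
    have "row L 0 \<bullet> col (g v) j = (L * g v) $$ (0, j)" using L cgv j n zi by simp
    thus ?thesis unfolding row_inj_rep_hom[OF fa E L n z i] using None zi Lg j n by auto
  next
    case (Some a)
    hence a: "a \<in> arrs Q" "src Q a = z" "tgt Q a = v" using inj_basis_nth_Some[OF fa i] by auto
    have cEa: "snd E a \<in> carrier_mat (fst E v) (fst E z)" using is_rep_carrier[OF E a(1)] a by simp
    have cIa: "snd ?I a \<in> carrier_mat (length (inj_basis Q v v)) (length (inj_basis Q v z))"
      using inj_rep_carrier[of Q v a] a by simp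
    have "row (L * snd E a) 0 \<bullet> col (g z) j = ((L * snd E a) * g z) $$ (0, j)"
      by (rule sym, rule index_mult_mat(1)) (use L cEa cg j n in auto)
    also have "(L * snd E a) * g z = L * (snd E a * g z)" using L cEa cg by simp
    also have "snd E a * g z = g v * snd ?I a" using is_hom_comm[OF g a(1)] a by simp
    also have "L * (g v * snd ?I a) = (L * g v) * snd ?I a" using L cgv cIa by simp
    also have "\<dots> = snd ?I a" using Lg cIa by simp
    finally have "row (L * snd E a) 0 \<bullet> col (g z) j = snd ?I a $$ (0, j)" .
    also have "\<dots> = (if inj_basis Q v z ! j = Some a then 1 else 0)"
      using j a n inj_basis_self[of Q v] by (simp add: inj_rep_entry)
    also have "\<dots> = (if i = j then 1 else 0)"
      using nth_eq_iff_index_eq[OF distinct_inj_basis[OF fa] i j] Some by auto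
    finally show ?thesis unfolding row_inj_rep_hom[OF fa E L n z i] using Some by simp
  qed
  show ?thesis
  proof (rule eq_matI)
    fix i j assume "i < dim_row (1\<^sub>m (fst ?I z) :: 'k mat)" "j < dim_col (1\<^sub>m (fst ?I z) :: 'k mat)"
    hence i: "i < length (inj_basis Q v z)" and j: "j < length (inj_basis Q v z)" using dz by auto
    show "(?r z * g z) $$ (i, j) = 1\<^sub>m (fst ?I z) $$ (i, j)"
      using entry[OF i j] cr cg i j dz by simp
  qed (use cr cg dz in auto)
qed

lemma injective_rep_inj_rep:
  assumes Q: "finite_quiver Q" and v: "v \<in> verts Q"
  shows "injective_rep Q (inj_rep Q v :: ('v,'a,'k::field) rep)"
  unfolding injective_rep_def
proof (intro allI impI)
  fix E :: "('v,'a,'k) rep" and g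
  assume E: "is_rep Q E" and g: "is_hom Q (inj_rep Q v) E g"
    and inj: "\<forall>z\<in>verts Q. \<forall>y\<in>carrier_vec (fst (inj_rep Q v :: ('v,'a,'k) rep) z).
      g z *\<^sub>v y = 0\<^sub>v (fst E z) \<longrightarrow> y = 0\<^sub>v (fst (inj_rep Q v :: ('v,'a,'k) rep) z)"
  have fa: "finite (arrs Q)" using Q by (simp add: finite_quiver_def)
  have dv: "fst (inj_rep Q v :: ('v,'a,'k) rep) v = length (inj_basis Q v v)" by (rule inj_rep_dim[OF v])
  have cgv: "g v \<in> carrier_mat (fst E v) (length (inj_basis Q v v))" using is_hom_carrier[OF g v] dv by simp
  obtain L where L: "L \<in> carrier_mat (length (inj_basis Q v v)) (fst E v)"
    and Lg: "L * g v = 1\<^sub>m (length (inj_basis Q v v))"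
    by (rule injective_mat_left_inverse[OF cgv]) (use inj v dv in auto)
  show "\<exists>r. is_hom Q E (inj_rep Q v) r \<and> (\<forall>z\<in>verts Q. r z * g z = 1\<^sub>m (fst (inj_rep Q v :: ('v,'a,'k) rep) z))"
    using is_hom_inj_rep_hom[OF Q E L inj_basis_self(2)] inj_rep_hom_left_inverse[OF fa E v g L Lg] by blast
qed

section \<open>A non-split extension of an injective by a projective\<close>

lemma index_twisted_sum:
  assumes Y: "is_rep Q Y" and X: "is_rep Q X" and b: "b \<in> arrs Q"
    and i: "i < fst Y (tgt Q b) + fst X (tgt Q b)" and j: "j < fst Y (src Q b) + fst X (src Q b)"
  shows "snd (twisted_sum Y X D) b $$ (i, j) =
    (if i < fst Y (tgt Q b) then (if j < fst Y (src Q b) then snd Y b $$ (i, j) else D b $$ (i, j - fst Y (src Q b)))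
     else if j < fst Y (src Q b) then 0 else snd X b $$ (i - fst Y (tgt Q b), j - fst Y (src Q b)))"
  using i j is_rep_carrier[OF Y b] is_rep_carrier[OF X b] by (simp add: twisted_sum_arr[OF Y X b])

(* The twist along gamma : w -> u sends the alpha-coordinate of I_v at w to the gamma-coordinate
   of P_w at u. *)
definition arrow_twist :: "('v,'a) quiver \<Rightarrow> 'v \<Rightarrow> 'v \<Rightarrow> 'a \<Rightarrow> 'a \<Rightarrow> 'a \<Rightarrow> 'k::field mat" where
  "arrow_twist Q w v \<alpha> \<gamma> b = mat (length (proj_basis Q w (tgt Q b))) (length (inj_basis Q v (src Q b)))
     (\<lambda>(i,j). if b = \<gamma> \<and> proj_basis Q w (tgt Q b) ! i = Some \<gamma> \<and> inj_basis Q v (src Q b) ! j = Some \<alpha> then 1 else 0)"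

lemma is_twist_arrow_twist:
  assumes Q: "wf_quiver Q"
  shows "is_twist Q (proj_rep Q w :: ('v,'a,'k::field) rep) (inj_rep Q v) (arrow_twist Q w v \<alpha> \<gamma>)"
  unfolding is_twist_def
proof (intro conjI ballI impI)
  fix b assume b: "b \<in> arrs Q"
  have s: "src Q b \<in> verts Q" and t: "tgt Q b \<in> verts Q" using wf_quiverD[OF Q b] by auto
  show "arrow_twist Q w v \<alpha> \<gamma> b \<in> carrier_mat (fst (proj_rep Q w :: ('v,'a,'k) rep) (tgt Q b))
      (fst (inj_rep Q v :: ('v,'a,'k) rep) (src Q b))"
    using s t by (simp add: arrow_twist_def proj_rep_dim inj_rep_dim)
  fix c assume c: "c \<in> arrs Q" and bc: "tgt Q b = src Q c"
  have "snd (proj_rep Q w :: ('v,'a,'k) rep) c * arrow_twist Q w v \<alpha> \<gamma> b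
      = 0\<^sub>m (length (proj_basis Q w (tgt Q c))) (length (inj_basis Q v (src Q b)))"
    by (rule mult_eq_zero_matI[OF proj_rep_carrier]) (use bc in \<open>auto simp: proj_rep_entry arrow_twist_def\<close>)
  moreover have "arrow_twist Q w v \<alpha> \<gamma> c * snd (inj_rep Q v :: ('v,'a,'k) rep) b
      = 0\<^sub>m (length (proj_basis Q w (tgt Q c))) (length (inj_basis Q v (src Q b)))"
    by (rule mult_eq_zero_matI[OF _ inj_rep_carrier]) (use bc in \<open>auto simp: inj_rep_entry arrow_twist_def\<close>)
  ultimately show "snd (proj_rep Q w :: ('v,'a,'k) rep) c * arrow_twist Q w v \<alpha> \<gamma> b
      + arrow_twist Q w v \<alpha> \<gamma> c * snd (inj_rep Q v :: ('v,'a,'k) rep) b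
      = 0\<^sub>m (fst (proj_rep Q w :: ('v,'a,'k) rep) (tgt Q c)) (fst (inj_rep Q v :: ('v,'a,'k) rep) (src Q b))"
    using wf_quiverD[OF Q c] s by (simp add: proj_rep_dim inj_rep_dim)
qed

locale twisted_ext_retraction =
  fixes Q :: "('v,'a) quiver" and w v :: 'v and \<alpha> \<gamma> :: 'a and \<rho> :: "('v,'k::field) rmor"
  assumes Q: "finite_quiver Q"
    and \<alpha>: "\<alpha> \<in> arrs Q" "src Q \<alpha> = w" "tgt Q \<alpha> = v"
    and \<gamma>: "\<gamma> \<in> arrs Q" "src Q \<gamma> = w" "\<gamma> \<noteq> \<alpha>"
    and \<rho>: "is_hom Q (twisted_sum (proj_rep Q w) (inj_rep Q v) (arrow_twist Q w v \<alpha> \<gamma>)) (proj_rep Q w) \<rho>"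
    and \<rho>_incl: "\<And>z. z \<in> verts Q \<Longrightarrow> \<rho> z * incl1_mat (fst (proj_rep Q w :: ('v,'a,'k) rep) z)
      (fst (inj_rep Q v :: ('v,'a,'k) rep) z) = 1\<^sub>m (fst (proj_rep Q w :: ('v,'a,'k) rep) z)"
begin

abbreviation P :: "('v,'a,'k) rep" where "P \<equiv> proj_rep Q w"
abbreviation I :: "('v,'a,'k) rep" where "I \<equiv> inj_rep Q v"
abbreviation T :: "('v,'a,'k) rep" where "T \<equiv> twisted_sum P I (arrow_twist Q w v \<alpha> \<gamma>)"
abbreviation nP :: "'v \<Rightarrow> nat" where "nP z \<equiv> length (proj_basis Q w z)"
abbreviation nI :: "'v \<Rightarrow> nat" where "nI z \<equiv> length (inj_basis Q v z)"

lemma retraction_carrier: "z \<in> verts Q \<Longrightarrow> \<rho> z \<in> carrier_mat (nP z) (nP z + nI z)"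
  using is_hom_carrier[OF \<rho>] by (simp add: twisted_sum_def proj_rep_dim inj_rep_dim)

lemma retraction_index_proj:
  assumes z: "z \<in> verts Q" and i: "i < nP z" and j: "j < nP z"
  shows "\<rho> z $$ (i, j) = (if i = j then 1 else 0)"
proof -
  have "\<rho> z $$ (i, j) = (\<rho> z * incl1_mat (nP z) (nI z)) $$ (i, j)"
    by (rule index_mult_incl1_mat_right[OF retraction_carrier[OF z] i j, symmetric])
  also have "\<dots> = (1\<^sub>m (nP z) :: 'k mat) $$ (i, j)" using \<rho>_incl[OF z] z by (simp add: proj_rep_dim inj_rep_dim)
  finally show ?thesis using i j by simp
qed

lemma index_twisted_sum_proj_inj:
  assumes b: "b \<in> arrs Q" and i: "i < nP (tgt Q b) + nI (tgt Q b)" and j: "j < nP (src Q b) + nI (src Q b)"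
  shows "snd T b $$ (i, j) =
    (if i < nP (tgt Q b) then (if j < nP (src Q b) then snd P b $$ (i, j) else arrow_twist Q w v \<alpha> \<gamma> b $$ (i, j - nP (src Q b)))
     else if j < nP (src Q b) then 0 else snd I b $$ (i - nP (tgt Q b), j - nP (src Q b)))"
proof -
  have wf: "wf_quiver Q" by (rule finite_quiver_wf[OF Q])
  have "src Q b \<in> verts Q" "tgt Q b \<in> verts Q" using wf_quiverD[OF wf b] by auto
  hence d: "fst P (src Q b) = nP (src Q b)" "fst P (tgt Q b) = nP (tgt Q b)"
    "fst I (src Q b) = nI (src Q b)" "fst I (tgt Q b) = nI (tgt Q b)"
    by (simp_all add: proj_rep_dim inj_rep_dim)
  show ?thesis
    using index_twisted_sum[OF is_rep_proj_rep[OF wf, of w, where 'k='k] is_rep_inj_rep[OF wf, of v, where 'k='k] b,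
        where i = i and j = j and D = "arrow_twist Q w v \<alpha> \<gamma>"] i j
    unfolding d by simp
qed

(* Naturality of the retraction along gamma. *)
lemma retraction_alpha_entry:
  assumes c: "c < nI w" "inj_basis Q v w ! c = Some \<alpha>"
  shows "\<rho> w $$ (0, nP w + c) = 1"
proof -
  have fa: "finite (arrs Q)" using Q by (simp add: finite_quiver_def)
  define u where "u = tgt Q \<gamma>"
  have vs: "w \<in> verts Q" "u \<in> verts Q" using wf_quiverD[OF finite_quiver_wf[OF Q] \<gamma>(1)] \<gamma> by (auto simp: u_def)
  have "Some \<gamma> \<in> set (proj_basis Q w u)" using Some_in_proj_basis[OF fa] \<gamma> by (simp add: u_def)
  then obtain k where k: "k < nP u" "proj_basis Q w u ! k = Some \<gamma>"
    and ku: "\<And>m. m < nP u \<Longrightarrow> proj_basis Q w u ! m = Some \<gamma> \<longleftrightarrow> m = k"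
    by (rule distinct_nth_unique[OF distinct_proj_basis[OF fa]]) blast
  have cT: "snd T \<gamma> \<in> carrier_mat (nP u + nI u) (nP w + nI w)"
    using is_rep_carrier[OF is_rep_twisted_sum[OF is_rep_proj_rep is_rep_inj_rep is_twist_arrow_twist] \<gamma>(1)]
      finite_quiver_wf[OF Q] vs \<gamma> by (simp add: u_def twisted_sum_def proj_rep_dim inj_rep_dim)
  have cP: "snd P \<gamma> \<in> carrier_mat (nP u) (nP w)" using proj_rep_carrier[of Q w \<gamma>] \<gamma> by (simp add: u_def)
  have j: "nP w + c < nP w + nI w" using c by simp
  have "(\<rho> u * snd T \<gamma>) $$ (k, nP w + c) = \<rho> u $$ (k, k)"
  proof (rule index_mult_unit_col[OF retraction_carrier[OF vs(2)] cT _ j])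
    show "k < nP u + nI u" using k by simp
    fix m assume m: "m < nP u + nI u"
    show "snd T \<gamma> $$ (m, nP w + c) = (if m = k then 1 else 0)"
      using index_twisted_sum_proj_inj[OF \<gamma>(1), of m "nP w + c"] m j \<gamma> c ku[of m] k
      by (auto simp: u_def arrow_twist_def inj_rep_entry)
  qed (use k in simp)
  also have "\<dots> = 1" using retraction_index_proj[OF vs(2) k(1) k(1)] by simp
  also have "\<rho> u * snd T \<gamma> = snd P \<gamma> * \<rho> w" using is_hom_comm[OF \<rho> \<gamma>(1)] \<gamma> by (simp add: u_def)
  also have "(snd P \<gamma> * \<rho> w) $$ (k, nP w + c) = \<rho> w $$ (0, nP w + c)"
    by (rule index_mult_unit_row[OF cP retraction_carrier[OF vs(1)] k(1) j proj_basis_self(2)])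
      (use k \<gamma> proj_basis_nth_None[OF fa] in \<open>auto simp: u_def proj_rep_entry\<close>)
  finally show ?thesis by simp
qed

(* Naturality of the retraction along an arrow b into v. *)
lemma retraction_top_entry:
  assumes b: "b \<in> arrs Q" "tgt Q b = v" and k: "k < nP v" "proj_basis Q w v ! k = Some \<alpha>"
    and c: "c < nI (src Q b)" "inj_basis Q v (src Q b) ! c = Some b"
  shows "\<rho> v $$ (k, nP v) = (if b = \<alpha> then \<rho> w $$ (0, nP w + c) else 0)"
proof -
  have fa: "finite (arrs Q)" using Q by (simp add: finite_quiver_def)
  define x where "x = src Q b"
  have vs: "x \<in> verts Q" "v \<in> verts Q" using wf_quiverD[OF finite_quiver_wf[OF Q] b(1)] b by (auto simp: x_def)
  have cT: "snd T b \<in> carrier_mat (nP v + nI v) (nP x + nI x)"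
    using is_rep_carrier[OF is_rep_twisted_sum[OF is_rep_proj_rep is_rep_inj_rep is_twist_arrow_twist] b(1)]
      finite_quiver_wf[OF Q] vs b by (simp add: x_def twisted_sum_def proj_rep_dim inj_rep_dim)
  have cP: "snd P b \<in> carrier_mat (nP v) (nP x)" using proj_rep_carrier[of Q w b] b by (simp add: x_def)
  have j: "nP x + c < nP x + nI x" using c by (simp add: x_def)
  have top: "inj_basis Q v v ! m = None \<longleftrightarrow> m = 0" if "m < nI v" for m
    using inj_basis_nth_None[OF fa that] by simp
  have "(\<rho> v * snd T b) $$ (k, nP x + c) = \<rho> v $$ (k, nP v)"
  proof (rule index_mult_unit_col[OF retraction_carrier[OF vs(2)] cT k(1) j])
    show "nP v < nP v + nI v" using inj_basis_self(2)[of Q v] by simp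
    fix m assume m: "m < nP v + nI v"
    show "snd T b $$ (m, nP x + c) = (if m = nP v then 1 else 0)"
      using index_twisted_sum_proj_inj[OF b(1), of m "nP x + c"] m j b c \<gamma>(3) top[of "m - nP v"]
      by (auto simp: x_def arrow_twist_def inj_rep_entry)
  qed
  also have "\<rho> v * snd T b = snd P b * \<rho> x" using is_hom_comm[OF \<rho> b(1)] b by (simp add: x_def)
  also have "(snd P b * \<rho> x) $$ (k, nP x + c) = (if b = \<alpha> then \<rho> w $$ (0, nP w + c) else 0)"
  proof (cases "b = \<alpha>")
    case True
    hence xw: "x = w" using \<alpha> by (simp add: x_def)
    show ?thesis
      using index_mult_unit_row[OF cP[unfolded xw] retraction_carrier[OF vs(1)[unfolded xw]] k(1) j[unfolded xw]
          proj_basis_self(2)] True k proj_basis_nth_None[OF fa] b \<alpha> xw by (auto simp: proj_rep_entry)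
  next
    case False
    have "(snd P b * \<rho> x) $$ (k, nP x + c) = 0"
      by (rule index_mult_zero_row[OF cP retraction_carrier[OF vs(1)] k(1) j])
        (use False k b in \<open>simp add: x_def proj_rep_entry\<close>)
    thus ?thesis using False by simp
  qed
  finally show ?thesis by simp
qed

end

lemma twisted_ext_not_split:
  assumes Q: "finite_quiver Q" and \<alpha>: "\<alpha> \<in> arrs Q" and \<beta>: "\<beta> \<in> arrs Q" "tgt Q \<beta> = tgt Q \<alpha>" "\<beta> \<noteq> \<alpha>"
    and \<gamma>: "\<gamma> \<in> arrs Q" "src Q \<gamma> = src Q \<alpha>" "\<gamma> \<noteq> \<alpha>"
  shows "\<not> ext_splits Q (proj_rep Q (src Q \<alpha>) :: ('v,'a,'k::field) rep)
    (twisted_ext (proj_rep Q (src Q \<alpha>)) (inj_rep Q (tgt Q \<alpha>)) (arrow_twist Q (src Q \<alpha>) (tgt Q \<alpha>) \<alpha> \<gamma>))"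
proof
  define w where "w = src Q \<alpha>"
  define v where "v = tgt Q \<alpha>"
  have fa: "finite (arrs Q)" using Q by (simp add: finite_quiver_def)
  assume "ext_splits Q (proj_rep Q (src Q \<alpha>) :: ('v,'a,'k) rep)
    (twisted_ext (proj_rep Q (src Q \<alpha>)) (inj_rep Q (tgt Q \<alpha>)) (arrow_twist Q (src Q \<alpha>) (tgt Q \<alpha>) \<alpha> \<gamma>))"
  hence "\<exists>\<rho> :: ('v,'k) rmor. is_hom Q (twisted_sum (proj_rep Q w) (inj_rep Q v) (arrow_twist Q w v \<alpha> \<gamma>)) (proj_rep Q w) \<rho> \<and>
      (\<forall>z\<in>verts Q. \<rho> z * incl1_mat (fst (proj_rep Q w :: ('v,'a,'k) rep) z) (fst (inj_rep Q v :: ('v,'a,'k) rep) z)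
        = 1\<^sub>m (fst (proj_rep Q w :: ('v,'a,'k) rep) z))"
    unfolding ext_splits_def twisted_ext_def w_def v_def by simp
  then obtain \<rho> :: "('v,'k) rmor"
    where \<rho>: "is_hom Q (twisted_sum (proj_rep Q w) (inj_rep Q v) (arrow_twist Q w v \<alpha> \<gamma>)) (proj_rep Q w) \<rho>"
      and \<rho>_incl: "\<forall>z\<in>verts Q. \<rho> z * incl1_mat (fst (proj_rep Q w :: ('v,'a,'k) rep) z)
        (fst (inj_rep Q v :: ('v,'a,'k) rep) z) = 1\<^sub>m (fst (proj_rep Q w :: ('v,'a,'k) rep) z)"
    by blast
  interpret twisted_ext_retraction Q w v \<alpha> \<gamma> \<rho>
    by unfold_locales (use Q \<alpha> \<gamma> \<rho> \<rho>_incl in \<open>simp_all add: w_def v_def\<close>)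
  have "Some \<alpha> \<in> set (proj_basis Q w v)" using Some_in_proj_basis[OF fa] \<alpha> by (simp add: w_def v_def)
  then obtain k where k: "k < length (proj_basis Q w v)" "proj_basis Q w v ! k = Some \<alpha>"
    by (auto simp: in_set_conv_nth)
  have "Some \<alpha> \<in> set (inj_basis Q v w)" using Some_in_inj_basis[OF fa] \<alpha> by (simp add: w_def v_def)
  then obtain c where c: "c < length (inj_basis Q v w)" "inj_basis Q v w ! c = Some \<alpha>"
    by (auto simp: in_set_conv_nth)
  have "Some \<beta> \<in> set (inj_basis Q v (src Q \<beta>))" using Some_in_inj_basis[OF fa] \<beta> by (simp add: v_def)
  then obtain c' where c': "c' < length (inj_basis Q v (src Q \<beta>))" "inj_basis Q v (src Q \<beta>) ! c' = Some \<beta>"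
    by (auto simp: in_set_conv_nth)
  have "\<rho> v $$ (k, length (proj_basis Q w v)) = 1"
    using retraction_top_entry[OF \<alpha>(1) v_def[symmetric] k c[unfolded w_def]] retraction_alpha_entry[OF c]
    by (simp add: w_def)
  moreover have "\<rho> v $$ (k, length (proj_basis Q w v)) = 0"
    using retraction_top_entry[OF \<beta>(1) _ k c'] \<beta> by (simp add: v_def)
  ultimately show False by simp
qed

lemma n_cluster_tilting_ext1_vanishes:
  fixes \<C> :: "('v,'a,'k::field) rep \<Rightarrow> bool" and P I :: "('v,'a,'k) rep"
  assumes Q: "wf_quiver Q" and n: "2 \<le> n" and \<C>: "n_cluster_tilting Q n \<C>"
    and P: "is_rep Q P" "projective_rep Q P" and I: "is_rep Q I" "injective_rep Q I"
  shows "ext_vanishes Q 1 I P"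
proof -
  have left: "\<C> X \<longleftrightarrow> (\<forall>i. 0 < i \<and> i < n \<longrightarrow> (\<forall>C. \<C> C \<longrightarrow> ext_vanishes Q i X C))" if "is_rep Q X" for X
    using \<C> that unfolding n_cluster_tilting_def by blast
  have right: "\<C> X \<longleftrightarrow> (\<forall>i. 0 < i \<and> i < n \<longrightarrow> (\<forall>C. \<C> C \<longrightarrow> ext_vanishes Q i C X))" if "is_rep Q X" for X
    using \<C> that unfolding n_cluster_tilting_def by blast
  have "\<C> P" using left[OF P(1)] projective_rep_ext_vanishes[OF Q P(2)] by simp
  moreover have "\<C> I" using right[OF I(1)] injective_rep_ext_vanishes[OF Q I(2)] by simp
  moreover have "0 < (1::nat) \<and> 1 < n" using n by simp
  ultimately show ?thesis using left[OF I(1)] by blast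
qed

(* An arrow alpha with a second arrow beta into its target and a second arrow gamma out of its
   source gives the non-split extension twisted_ext, whereas Ext^1(I, P) = 0. *)
lemma n_cluster_tilting_lonely_arrow:
  fixes \<C> :: "('v, 'a, 'k::field) rep \<Rightarrow> bool"
  assumes Q: "finite_quiver Q" and n: "2 \<le> n" and \<C>: "n_cluster_tilting Q n \<C>"
    and \<alpha>: "\<alpha> \<in> arrs Q" and \<beta>: "\<beta> \<in> arrs Q" "tgt Q \<beta> = tgt Q \<alpha>" and \<gamma>: "\<gamma> \<in> arrs Q" "src Q \<gamma> = src Q \<alpha>"
  shows "\<beta> = \<alpha> \<or> \<gamma> = \<alpha>"
proof (rule ccontr)
  assume ne: "\<not> (\<beta> = \<alpha> \<or> \<gamma> = \<alpha>)"
  define P where "P = (proj_rep Q (src Q \<alpha>) :: ('v,'a,'k) rep)"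
  define I where "I = (inj_rep Q (tgt Q \<alpha>) :: ('v,'a,'k) rep)"
  define e where "e = twisted_ext P I (arrow_twist Q (src Q \<alpha>) (tgt Q \<alpha>) \<alpha> \<gamma>)"
  have wf: "wf_quiver Q" by (rule finite_quiver_wf[OF Q])
  have vs: "src Q \<alpha> \<in> verts Q" "tgt Q \<alpha> \<in> verts Q" using wf_quiverD[OF wf \<alpha>] by auto
  have P: "is_rep Q P" "projective_rep Q P"
    unfolding P_def by (rule is_rep_proj_rep[OF wf], rule projective_rep_proj_rep[OF Q vs(1)])
  have I: "is_rep Q I" "injective_rep Q I"
    unfolding I_def by (rule is_rep_inj_rep[OF wf], rule injective_rep_inj_rep[OF Q vs(2)])
  have "is_ext Q 1 I P e"
    unfolding e_def P_def I_def by (rule twisted_ext_is_ext[OF is_rep_proj_rep[OF wf] is_rep_inj_rep[OF wf] is_twist_arrow_twist[OF wf]])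
  hence "yoneda_equiv Q 1 I P e (trivial_ext 1 I P)"
    using n_cluster_tilting_ext1_vanishes[OF wf n \<C> P I] unfolding ext_vanishes_def by blast
  hence "ext_splits Q P e"
    using ext_splits_yoneda_equiv[OF wf] trivial_ext_splits[OF P(1) I(1)] by blast
  thus False using twisted_ext_not_split[OF Q \<alpha> \<beta> _ \<gamma>] ne unfolding e_def P_def I_def by blast
qed

theorem lemma2p4:
  fixes Q :: "('v, 'a) quiver" and n :: nat
    and \<C> :: "('v, 'a, 'k::field) rep \<Rightarrow> bool"
  assumes "finite_quiver Q" and "connected_quiver Q" and "n \<ge> 2"
    and "n_cluster_tilting Q n \<C>"
  shows "(\<forall>\<alpha>\<in>arrs Q. \<forall>\<beta>\<in>arrs Q. \<alpha> \<noteq> \<beta> \<and> tgt Q \<alpha> = tgt Q \<beta> \<longrightarrow>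
            out_deg Q (src Q \<alpha>) = 1 \<and> out_deg Q (src Q \<beta>) = 1) \<and>
         (\<forall>\<alpha>\<in>arrs Q. \<forall>\<beta>\<in>arrs Q. \<alpha> \<noteq> \<beta> \<and> src Q \<alpha> = src Q \<beta> \<longrightarrow>
            in_deg Q (tgt Q \<alpha>) = 1 \<and> in_deg Q (tgt Q \<beta>) = 1)"
proof -
  note lonely = n_cluster_tilting_lonely_arrow[OF assms(1,3,4)]
  have out: "out_deg Q (src Q \<alpha>) = 1" if "\<alpha> \<in> arrs Q" "\<beta> \<in> arrs Q" "\<alpha> \<noteq> \<beta>" "tgt Q \<beta> = tgt Q \<alpha>" for \<alpha> \<beta>
  proof -
    have "\<gamma> = \<alpha>" if "\<gamma> \<in> arrs Q" "src Q \<gamma> = src Q \<alpha>" for \<gamma>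
      using lonely[OF \<open>\<alpha> \<in> arrs Q\<close> \<open>\<beta> \<in> arrs Q\<close> \<open>tgt Q \<beta> = tgt Q \<alpha>\<close> that] \<open>\<alpha> \<noteq> \<beta>\<close> by simp
    hence "{x \<in> arrs Q. src Q x = src Q \<alpha>} = {\<alpha>}" using that(1) by auto
    thus ?thesis by (simp add: out_deg_def)
  qed
  have "in": "in_deg Q (tgt Q \<alpha>) = 1" if "\<alpha> \<in> arrs Q" "\<beta> \<in> arrs Q" "\<alpha> \<noteq> \<beta>" "src Q \<beta> = src Q \<alpha>" for \<alpha> \<beta>
  proof -
    have "\<delta> = \<alpha>" if "\<delta> \<in> arrs Q" "tgt Q \<delta> = tgt Q \<alpha>" for \<delta>
      using lonely[OF \<open>\<alpha> \<in> arrs Q\<close> that \<open>\<beta> \<in> arrs Q\<close> \<open>src Q \<beta> = src Q \<alpha>\<close>] \<open>\<alpha> \<noteq> \<beta>\<close> by simp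
    hence "{x \<in> arrs Q. tgt Q x = tgt Q \<alpha>} = {\<alpha>}" using that(1) by auto
    thus ?thesis by (simp add: in_deg_def)
  qed
  show ?thesis
  proof (intro conjI ballI impI)
    fix \<alpha> \<beta> assume "\<alpha> \<in> arrs Q" "\<beta> \<in> arrs Q" "\<alpha> \<noteq> \<beta> \<and> tgt Q \<alpha> = tgt Q \<beta>"
    thus "out_deg Q (src Q \<alpha>) = 1" "out_deg Q (src Q \<beta>) = 1" using out[of \<alpha> \<beta>] out[of \<beta> \<alpha>] by auto
  next
    fix \<alpha> \<beta> assume "\<alpha> \<in> arrs Q" "\<beta> \<in> arrs Q" "\<alpha> \<noteq> \<beta> \<and> src Q \<alpha> = src Q \<beta>"
    thus "in_deg Q (tgt Q \<alpha>) = 1" "in_deg Q (tgt Q \<beta>) = 1" using "in"[of \<alpha> \<beta>] "in"[of \<beta> \<alpha>] by auto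
  qed
qed

end
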